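(* For each $t\in[0,1)$, the operator $C_t: VH(\mathbb D)\to VH(\mathbb D)$ satisfies: (i) $\sigma_{pt}(C_t;VH(\mathbb D))=\{\frac1{m+1}: m\in\mathbb N_0\}$; (ii) $\sigma(C_t;VH(\mathbb D))=\{\frac1{m+1}: m\in\mathbb N_0\}\cup\{0\}$.
   Context: $\mathbb D$ is the open unit disc. Define $v(z)=1$ if $|z|\le 1-1/e$ and $v(z)=(-\log(1-|z|))^{-1}$ if $1-1/e\le|z|<1$, $v_k=v^k$, $H^\infty_{v_k}=\{f \text{ analytic on }\mathbb D:\sup_{z\in\mathbb D}v_k(z)|f(z)|<\infty\}$ normed by this sup, and $VH(\mathbb D)=\bigcup_kH^\infty_{v_k}$ with the finest locally convex topology making all inclusions continuous. For $t\in[0,1]$, $C_tf(z)=\frac1z\int_0^z\frac{f(\zeta)}{1-t\zeta}\,d\zeta$ for $z\neq0$ and $C_tf(0)=f(0)$. For continuous linear $T$ on a locally convex space $X$, $\rho(T;X)$ is the set of $\lambda\in\mathbb C$ such that $\lambda I-T$ has a continuous inverse on $X$, $\sigma(T;X)=\mathbb C\setminus\rho(T;X)$, and $\sigma_{pt}(T;X)$ is the set of $\lambda$ with $\lambda I-T$ not injective. $\mathbb N_0=\{0,1,2,\dots\}$. *)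

theory Defs
  imports "HOL-Complex_Analysis.Complex_Analysis"
begin

definition wv :: "complex \<Rightarrow> real" where
  "wv z = (if norm z \<le> 1 - 1 / exp 1 then 1 else 1 / (- ln (1 - norm z)))"

definition wvk :: "nat \<Rightarrow> complex \<Rightarrow> real" where
  "wvk k z = (wv z) ^ k"

text \<open>Analytic functions on the disc are represented by functions complex => complex
  that vanish outside the open unit disc (so equality of elements = equality on the disc).\<close>
definition Hv :: "nat \<Rightarrow> (complex \<Rightarrow> complex) set" where
  "Hv k = {f. f holomorphic_on ball 0 1 \<and> (\<forall>z. 1 \<le> norm z \<longrightarrow> f z = 0)
             \<and> (\<exists>C. \<forall>z\<in>ball 0 1. wvk k z * norm (f z) \<le> C)}"

definition Hv_norm :: "nat \<Rightarrow> (complex \<Rightarrow> complex) \<Rightarrow> real" where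
  "Hv_norm k f = (SUP z\<in>ball 0 1. wvk k z * norm (f z))"

definition VH :: "(complex \<Rightarrow> complex) set" where
  "VH = (\<Union>k. Hv k)"

text \<open>Continuous seminorms of the finest locally convex topology on VH making all inclusions
  H_{v_k} -> VH continuous: exactly the seminorms on VH whose restriction to each step is
  continuous (bounded by a multiple of the step norm).\<close>
definition VH_cont_seminorm :: "((complex \<Rightarrow> complex) \<Rightarrow> real) \<Rightarrow> bool" where
  "VH_cont_seminorm p \<longleftrightarrow>
     (\<forall>f\<in>VH. 0 \<le> p f) \<and>
     (\<forall>f\<in>VH. \<forall>g\<in>VH. p (\<lambda>z. f z + g z) \<le> p f + p g) \<and>
     (\<forall>c. \<forall>f\<in>VH. p (\<lambda>z. c * f z) = norm c * p f) \<and>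
     (\<forall>k. \<exists>C. \<forall>f\<in>Hv k. p f \<le> C * Hv_norm k f)"

definition VH_linear :: "((complex \<Rightarrow> complex) \<Rightarrow> (complex \<Rightarrow> complex)) \<Rightarrow> bool" where
  "VH_linear T \<longleftrightarrow> (\<forall>f\<in>VH. T f \<in> VH) \<and>
     (\<forall>f\<in>VH. \<forall>g\<in>VH. T (\<lambda>z. f z + g z) = (\<lambda>z. T f z + T g z)) \<and>
     (\<forall>c. \<forall>f\<in>VH. T (\<lambda>z. c * f z) = (\<lambda>z. c * T f z))"

definition VH_cont_op :: "((complex \<Rightarrow> complex) \<Rightarrow> (complex \<Rightarrow> complex)) \<Rightarrow> bool" where
  "VH_cont_op T \<longleftrightarrow> VH_linear T \<and>
     (\<forall>q. VH_cont_seminorm q \<longrightarrow> VH_cont_seminorm (q \<circ> T))"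

definition VH_resolvent :: "((complex \<Rightarrow> complex) \<Rightarrow> (complex \<Rightarrow> complex)) \<Rightarrow> complex set" where
  "VH_resolvent T = {l. \<exists>S. VH_cont_op S \<and>
      (\<forall>f\<in>VH. S (\<lambda>z. l * f z - T f z) = f) \<and>
      (\<forall>f\<in>VH. (\<lambda>z. l * S f z - T (S f) z) = f)}"

definition VH_spectrum :: "((complex \<Rightarrow> complex) \<Rightarrow> (complex \<Rightarrow> complex)) \<Rightarrow> complex set" where
  "VH_spectrum T = UNIV - VH_resolvent T"

definition VH_point_spectrum :: "((complex \<Rightarrow> complex) \<Rightarrow> (complex \<Rightarrow> complex)) \<Rightarrow> complex set" where
  "VH_point_spectrum T = {l. \<exists>f\<in>VH. f \<noteq> (\<lambda>z. 0) \<and> (\<lambda>z. l * f z - T f z) = (\<lambda>z. 0)}"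

definition Ces :: "real \<Rightarrow> (complex \<Rightarrow> complex) \<Rightarrow> (complex \<Rightarrow> complex)" where
  "Ces t f = (\<lambda>z. if z = 0 then f 0
      else if norm z < 1 then (1 / z) * contour_integral (linepath 0 z) (\<lambda>\<zeta>. f \<zeta> / (1 - of_real t * \<zeta>))
      else 0)"

end

theory Submission
  imports Defs "HOL-Real_Asymp.Real_Asymp"
begin

text \<open>
  \<open>C\<^sub>t f = \<phi>\<close> means \<open>(z \<phi>)' = f / (1 - t z)\<close>. Integrating along radii, where the weights
  \<open>v\<^sub>k\<close> decrease, gives \<open>\<parallel>C\<^sub>t f\<parallel>\<^sub>k \<le> \<parallel>f\<parallel>\<^sub>k / (1 - t)\<close> on every step \<open>H\<^sub>v\<^sub>k\<close>, hence continuity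
  on the inductive limit \<open>VH\<close>. An eigenfunction satisfies \<open>f = \<lambda> (1 - t z) (z f)'\<close>; comparing
  lowest-order terms at 0 forces \<open>\<lambda> = 1/(m + 1)\<close>, and \<open>z\<^sup>m / (1 - t z)\<^sup>m\<^sup>+\<^sup>1\<close> is an
  eigenfunction. For any other \<open>\<lambda> \<noteq> 0\<close>, with \<open>a = 1/\<lambda>\<close>, the equation \<open>\<lambda> f - C\<^sub>t f = h\<close> is
  solved by \<open>f = a h + a\<^sup>2 (1 - t z)\<^sup>-\<^sup>a \<Psi>\<close>, where \<open>\<Psi>\<close> solves the Euler equation
  \<open>z \<Psi>' + (1 - a) \<Psi> = (1 - t z)\<^sup>a\<^sup>-\<^sup>1 h\<close>: its Taylor coefficients are those of the right-hand
  side divided by \<open>n + 1 - a\<close>, which stay away from 0, and an integrating factor along rays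
  bounds \<open>\<Psi>\<close> in every \<open>H\<^sub>v\<^sub>k\<close> with a constant independent of \<open>k\<close>; so the inverse is
  continuous. Finally \<open>0\<close> lies in the spectrum because \<open>\<surd>(1 - z)\<close> has no preimage in \<open>VH\<close>.
\<close>

section \<open>The weights and the steps \<open>H\<^sub>v\<^sub>k\<close>\<close>

lemma wv_pos_le_one:
  assumes "norm z < 1"
  shows "0 < wv z" "wv z \<le> 1"
proof -
  have "0 < wv z \<and> wv z \<le> 1"
  proof (cases "norm z \<le> 1 - 1 / exp 1")
    case False
    hence "ln (1 - norm z) < ln (1 / exp 1)"
      using assms by (intro ln_less_cancel_iff[THEN iffD2]) auto
    hence "1 < - ln (1 - norm z)" by (simp add: ln_div)
    moreover have "wv z = 1 / (- ln (1 - norm z))" using False by (simp add: wv_def)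
    ultimately show ?thesis by (metis divide_le_eq_1 le_less_trans less_imp_le zero_less_divide_1_iff zero_less_one)
  qed (simp add: wv_def)
  thus "0 < wv z" "wv z \<le> 1" by auto
qed

lemma wv_eq_1: "norm z \<le> 1/2 \<Longrightarrow> wv z = 1"
proof -
  assume "norm z \<le> 1/2"
  moreover have "1 / exp 1 \<le> (1/2::real)"
    using exp_ge_add_one_self[of 1] by (simp add: field_simps)
  ultimately have "norm z \<le> 1 - 1 / exp 1" by linarith
  thus ?thesis by (simp add: wv_def)
qed

lemma wv_antimono:
  assumes "norm z \<le> norm w" "norm w < 1"
  shows "wv w \<le> wv z"
proof (cases "norm z \<le> 1 - 1 / exp 1")
  case True
  thus ?thesis using wv_pos_le_one(2)[OF assms(2)] by (simp add: wv_def)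
next
  case False
  hence "ln (1 - norm z) < ln (1 / exp 1)"
    using assms by (intro ln_less_cancel_iff[THEN iffD2]) auto
  hence "1 < - ln (1 - norm z)" by (simp add: ln_div)
  moreover have "ln (1 - norm w) \<le> ln (1 - norm z)"
    using assms by (subst ln_le_cancel_iff) auto
  ultimately have "1 / (- ln (1 - norm w)) \<le> 1 / (- ln (1 - norm z))"
    by (intro frac_le) auto
  moreover have "wv z = 1 / (- ln (1 - norm z))" using False by (simp add: wv_def)
  moreover have "wv w = 1 / (- ln (1 - norm w))" using False assms(1) by (simp add: wv_def)
  ultimately show ?thesis by presburger
qed

lemma wv_one_minus_exp:
  assumes "1 < L"
  shows "wv (of_real (1 - exp (- L))) = 1 / L"
proof -
  have "exp (- L) < 1" using assms by simp
  hence n: "norm (complex_of_real (1 - exp (- L))) = 1 - exp (- L)"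
    unfolding norm_of_real by simp
  have "exp (- L) < 1 / exp 1" using assms by (simp add: exp_minus field_simps)
  hence "\<not> norm (complex_of_real (1 - exp (- L))) \<le> 1 - 1 / exp 1" unfolding n by linarith
  thus ?thesis unfolding wv_def n by simp
qed

lemma wvk_pos_le_one:
  assumes "norm z < 1"
  shows "0 < wvk k z" "wvk k z \<le> 1"
  using wv_pos_le_one[OF assms] by (auto simp: wvk_def power_le_one)

lemma wvk_eq_1: "norm z \<le> 1/2 \<Longrightarrow> wvk k z = 1"
  by (simp add: wvk_def wv_eq_1)

lemma wvk_antimono:
  assumes "norm z \<le> norm w" "norm w < 1"
  shows "wvk k w \<le> wvk k z"
  unfolding wvk_def using wv_antimono[OF assms] wv_pos_le_one[OF assms(2)]
  by (intro power_mono) auto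

lemma wvk_antimono_exponent:
  assumes "norm z < 1" "k \<le> k'"
  shows "wvk k' z \<le> wvk k z"
  unfolding wvk_def using wv_pos_le_one[OF assms(1)] assms(2) by (intro power_decreasing) auto

lemma HvI:
  assumes "f holomorphic_on ball 0 1" "\<And>z. 1 \<le> norm z \<Longrightarrow> f z = 0"
    "\<And>z. z \<in> ball 0 1 \<Longrightarrow> wvk k z * norm (f z) \<le> C"
  shows "f \<in> Hv k"
  using assms unfolding Hv_def by (auto intro!: exI[of _ C])

lemma HvD:
  assumes "f \<in> Hv k"
  shows "f holomorphic_on ball 0 1" "\<And>z. 1 \<le> norm z \<Longrightarrow> f z = 0"
    "\<exists>C. \<forall>z\<in>ball 0 1. wvk k z * norm (f z) \<le> C"
  using assms by (auto simp: Hv_def)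

lemma Hv_norm_upper:
  assumes "f \<in> Hv k" "z \<in> ball 0 1"
  shows "wvk k z * norm (f z) \<le> Hv_norm k f"
proof -
  have "bdd_above ((\<lambda>z. wvk k z * norm (f z)) ` ball 0 1)"
    using HvD(3)[OF assms(1)] by (auto simp: bdd_above_def)
  thus ?thesis unfolding Hv_norm_def using assms(2) by (rule cSUP_upper2) auto
qed

lemma Hv_norm_least:
  assumes "\<And>z. z \<in> ball 0 1 \<Longrightarrow> wvk k z * norm (f z) \<le> M"
  shows "Hv_norm k f \<le> M"
  unfolding Hv_norm_def using assms by (intro cSUP_least) auto

lemma Hv_norm_nonneg:
  assumes "f \<in> Hv k"
  shows "0 \<le> Hv_norm k f"
proof -
  have "0 \<le> wvk k 0 * norm (f 0)" using wvk_pos_le_one[of 0 k] by simp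
  also have "\<dots> \<le> Hv_norm k f" using Hv_norm_upper[OF assms, of 0] by simp
  finally show ?thesis .
qed

lemma Hv_mono: "k \<le> k' \<Longrightarrow> Hv k \<subseteq> Hv k'"
proof
  fix f assume kk: "k \<le> k'" and f: "f \<in> Hv k"
  obtain C where C: "\<forall>z\<in>ball 0 1. wvk k z * norm (f z) \<le> C" using HvD(3)[OF f] by blast
  show "f \<in> Hv k'"
  proof (rule HvI[OF HvD(1,2)[OF f]])
    fix z :: complex assume z: "z \<in> ball 0 1"
    have "wvk k' z * norm (f z) \<le> wvk k z * norm (f z)"
      using wvk_antimono_exponent[OF _ kk, of z] z by (intro mult_right_mono) auto
    thus "wvk k' z * norm (f z) \<le> C" using C z by fastforce
  qed auto
qed

lemma Hv_add:
  assumes "f \<in> Hv k" "g \<in> Hv k"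
  shows "(\<lambda>z. f z + g z) \<in> Hv k"
proof -
  obtain C where C: "\<forall>z\<in>ball 0 1. wvk k z * norm (f z) \<le> C" using HvD(3)[OF assms(1)] by blast
  obtain D where D: "\<forall>z\<in>ball 0 1. wvk k z * norm (g z) \<le> D" using HvD(3)[OF assms(2)] by blast
  show ?thesis
  proof (rule HvI)
    fix z :: complex assume z: "z \<in> ball 0 1"
    have "wvk k z * norm (f z + g z) \<le> wvk k z * norm (f z) + wvk k z * norm (g z)"
      using wvk_pos_le_one[of z k] z
      by (simp add: distrib_left[symmetric] mult_left_mono norm_triangle_ineq)
    thus "wvk k z * norm (f z + g z) \<le> C + D" using C D z by fastforce
  qed (use HvD(1,2)[OF assms(1)] HvD(1,2)[OF assms(2)] in \<open>auto intro: holomorphic_intros\<close>)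
qed

lemma Hv_cmult:
  assumes "f \<in> Hv k"
  shows "(\<lambda>z. c * f z) \<in> Hv k"
proof -
  obtain C where C: "\<forall>z\<in>ball 0 1. wvk k z * norm (f z) \<le> C" using HvD(3)[OF assms] by blast
  show ?thesis
  proof (rule HvI)
    fix z :: complex assume z: "z \<in> ball 0 1"
    have "wvk k z * norm (c * f z) = norm c * (wvk k z * norm (f z))" by (simp add: norm_mult)
    also have "\<dots> \<le> norm c * C" using C z by (intro mult_left_mono) auto
    finally show "wvk k z * norm (c * f z) \<le> norm c * C" .
  qed (use HvD(1,2)[OF assms] in \<open>auto intro: holomorphic_intros\<close>)
qed

lemma mem_VH_iff: "f \<in> VH \<longleftrightarrow> (\<exists>k. f \<in> Hv k)"
  by (auto simp: VH_def)

lemma VH_add: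
  assumes "f \<in> VH" "g \<in> VH"
  shows "(\<lambda>z. f z + g z) \<in> VH"
proof -
  obtain k1 k2 where "f \<in> Hv k1" "g \<in> Hv k2" using assms by (auto simp: mem_VH_iff)
  hence "f \<in> Hv (max k1 k2)" "g \<in> Hv (max k1 k2)"
    using Hv_mono[of k1 "max k1 k2"] Hv_mono[of k2 "max k1 k2"] by auto
  thus ?thesis using Hv_add mem_VH_iff by blast
qed

lemma VH_cmult: "f \<in> VH \<Longrightarrow> (\<lambda>z. c * f z) \<in> VH"
  using Hv_cmult mem_VH_iff by blast

lemma holomorphic_on_VH: "f \<in> VH \<Longrightarrow> f holomorphic_on ball 0 1"
  using HvD(1) mem_VH_iff by blast

lemma VH_eq_zero_iff:
  assumes "f \<in> VH"
  shows "f = (\<lambda>z. 0) \<longleftrightarrow> (\<forall>z\<in>ball 0 1. f z = 0)"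
  using assms HvD(2) by (auto simp: mem_VH_iff fun_eq_iff not_less)

lemma zero_in_VH: "(\<lambda>z. 0) \<in> VH"
  using HvI[of "\<lambda>z. 0" 0 0] by (auto simp: mem_VH_iff)

section \<open>Continuous operators and resolvents on \<open>VH\<close>\<close>

lemma VH_cont_opI:
  assumes lin: "VH_linear T"
    and bounded: "\<And>k. \<exists>C. \<forall>f\<in>Hv k. T f \<in> Hv k \<and> Hv_norm k (T f) \<le> C * Hv_norm k f"
  shows "VH_cont_op T"
  unfolding VH_cont_op_def
proof (intro conjI allI impI lin)
  fix q assume q: "VH_cont_seminorm q"
  have TV: "T f \<in> VH" if "f \<in> VH" for f using lin that by (auto simp: VH_linear_def)
  show "VH_cont_seminorm (q \<circ> T)"
    unfolding VH_cont_seminorm_def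
  proof (intro conjI ballI allI)
    fix f assume "f \<in> VH"
    thus "0 \<le> (q \<circ> T) f" using q TV by (auto simp: VH_cont_seminorm_def)
  next
    fix f g assume f: "f \<in> VH" and g: "g \<in> VH"
    have "(q \<circ> T) (\<lambda>z. f z + g z) = q (\<lambda>z. T f z + T g z)"
      using lin f g by (simp add: VH_linear_def)
    also have "\<dots> \<le> q (T f) + q (T g)"
      using q TV[OF f] TV[OF g] by (simp add: VH_cont_seminorm_def)
    finally show "(q \<circ> T) (\<lambda>z. f z + g z) \<le> (q \<circ> T) f + (q \<circ> T) g" by simp
  next
    fix c f assume f: "f \<in> VH"
    have "(q \<circ> T) (\<lambda>z. c * f z) = q (\<lambda>z. c * T f z)"
      using lin f by (simp add: VH_linear_def)
    also have "\<dots> = norm c * q (T f)"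
      using q TV[OF f] by (simp add: VH_cont_seminorm_def)
    finally show "(q \<circ> T) (\<lambda>z. c * f z) = norm c * (q \<circ> T) f" by simp
  next
    fix k
    obtain C1 where C1: "\<forall>f\<in>Hv k. q f \<le> C1 * Hv_norm k f"
      using q unfolding VH_cont_seminorm_def by blast
    obtain C2 where C2: "\<forall>f\<in>Hv k. T f \<in> Hv k \<and> Hv_norm k (T f) \<le> C2 * Hv_norm k f"
      using bounded by blast
    show "\<exists>C. \<forall>f\<in>Hv k. (q \<circ> T) f \<le> C * Hv_norm k f"
    proof (intro exI ballI)
      fix f assume f: "f \<in> Hv k"
      have Tf: "T f \<in> Hv k" "Hv_norm k (T f) \<le> C2 * Hv_norm k f" using C2 f by auto
      have "q (T f) \<le> max C1 0 * Hv_norm k (T f)"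
        using C1 Tf Hv_norm_nonneg[of "T f" k] by (fastforce intro: order_trans[OF _ mult_right_mono])
      also have "\<dots> \<le> max C1 0 * (max C2 0 * Hv_norm k f)"
        using Tf Hv_norm_nonneg[OF f]
        by (intro mult_left_mono) (auto intro: order_trans[OF _ mult_right_mono[of C2 "max C2 0"]])
      finally show "(q \<circ> T) f \<le> (max C1 0 * max C2 0) * Hv_norm k f" by (simp add: mult.assoc)
    qed
  qed
qed

lemma point_spectrum_disjoint_resolvent:
  "l \<in> VH_point_spectrum T \<Longrightarrow> l \<notin> VH_resolvent T"
proof
  assume "l \<in> VH_point_spectrum T" "l \<in> VH_resolvent T"
  then obtain f S where f: "f \<in> VH" "f \<noteq> (\<lambda>z. 0)" "(\<lambda>z. l * f z - T f z) = (\<lambda>z. 0)"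
    and S: "VH_cont_op S" "\<forall>f\<in>VH. S (\<lambda>z. l * f z - T f z) = f"
    unfolding VH_point_spectrum_def VH_resolvent_def by blast
  have lin: "\<forall>c. \<forall>f\<in>VH. S (\<lambda>z. c * f z) = (\<lambda>z. c * S f z)"
    using S(1) unfolding VH_cont_op_def VH_linear_def by blast
  have "S (\<lambda>z. 0) = (\<lambda>z. 0)" using lin[rule_format, OF zero_in_VH, of 0] by simp
  moreover have "S (\<lambda>z. l * f z - T f z) = f" using S(2) f(1) by blast
  ultimately show False using f(2,3) by simp
qed

context
  fixes T :: "(complex \<Rightarrow> complex) \<Rightarrow> complex \<Rightarrow> complex" and l :: complex and C :: real
  assumes lin: "VH_linear T"
    and not_eigen: "l \<notin> VH_point_spectrum T"
    and solvable: "\<And>k h. h \<in> Hv k \<Longrightarrow>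
      \<exists>f\<in>Hv k. (\<lambda>z. l * f z - T f z) = h \<and> Hv_norm k f \<le> C * Hv_norm k h"
begin

definition VH_shift :: "(complex \<Rightarrow> complex) \<Rightarrow> complex \<Rightarrow> complex" where
  "VH_shift f = (\<lambda>z. l * f z - T f z)"

definition VH_shift_inverse :: "(complex \<Rightarrow> complex) \<Rightarrow> complex \<Rightarrow> complex" where
  "VH_shift_inverse h = (THE f. f \<in> VH \<and> VH_shift f = h)"

lemma VH_shift_add:
  assumes "f \<in> VH" "g \<in> VH"
  shows "VH_shift (\<lambda>z. f z + g z) = (\<lambda>z. VH_shift f z + VH_shift g z)"
proof -
  have "T (\<lambda>z. f z + g z) = (\<lambda>z. T f z + T g z)" using lin assms by (simp add: VH_linear_def)
  thus ?thesis by (simp add: VH_shift_def fun_eq_iff algebra_simps)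
qed

lemma VH_shift_cmult:
  assumes "f \<in> VH"
  shows "VH_shift (\<lambda>z. c * f z) = (\<lambda>z. c * VH_shift f z)"
proof -
  have "T (\<lambda>z. c * f z) = (\<lambda>z. c * T f z)" using lin assms by (simp add: VH_linear_def)
  thus ?thesis by (simp add: VH_shift_def fun_eq_iff algebra_simps)
qed

lemma VH_shift_inj:
  assumes "f \<in> VH" "g \<in> VH" "VH_shift f = VH_shift g"
  shows "f = g"
proof -
  have mg: "(\<lambda>z. (- 1) * g z) \<in> VH" using VH_cmult[OF assms(2)] .
  have d: "(\<lambda>z. f z + (- 1) * g z) \<in> VH" using VH_add[OF assms(1) mg] .
  have "VH_shift (\<lambda>z. f z + (- 1) * g z) = (\<lambda>z. VH_shift f z + VH_shift (\<lambda>z. (- 1) * g z) z)"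
    by (rule VH_shift_add[OF assms(1) mg])
  also have "\<dots> = (\<lambda>z. VH_shift f z + (- 1) * VH_shift g z)"
    by (simp only: VH_shift_cmult[OF assms(2)])
  also have "\<dots> = (\<lambda>z. 0)" using assms(3) by simp
  finally have "VH_shift (\<lambda>z. f z + (- 1) * g z) = (\<lambda>z. 0)" .
  hence "(\<lambda>z. f z + (- 1) * g z) = (\<lambda>z. 0)"
    using not_eigen d unfolding VH_point_spectrum_def VH_shift_def by blast
  thus ?thesis by (simp add: fun_eq_iff)
qed

lemma VH_shift_inverse_eq: "f \<in> VH \<Longrightarrow> VH_shift f = h \<Longrightarrow> VH_shift_inverse h = f"
  unfolding VH_shift_inverse_def using VH_shift_inj by (intro the_equality) auto

lemma VH_shift_inverse_Hv:
  assumes "h \<in> Hv k"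
  shows "VH_shift_inverse h \<in> Hv k" "VH_shift (VH_shift_inverse h) = h"
    "Hv_norm k (VH_shift_inverse h) \<le> C * Hv_norm k h"
proof -
  obtain f where f: "f \<in> Hv k" "VH_shift f = h" "Hv_norm k f \<le> C * Hv_norm k h"
    using solvable[OF assms] unfolding VH_shift_def by blast
  have "VH_shift_inverse h = f" by (rule VH_shift_inverse_eq) (use f in \<open>auto simp: mem_VH_iff\<close>)
  thus "VH_shift_inverse h \<in> Hv k" "VH_shift (VH_shift_inverse h) = h"
    "Hv_norm k (VH_shift_inverse h) \<le> C * Hv_norm k h" using f by auto
qed

lemma VH_shift_inverse_VH: "h \<in> VH \<Longrightarrow> VH_shift_inverse h \<in> VH \<and> VH_shift (VH_shift_inverse h) = h"
  using VH_shift_inverse_Hv by (auto simp: mem_VH_iff)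

lemma VH_shift_inverse_cont_op: "VH_cont_op VH_shift_inverse"
proof (rule VH_cont_opI)
  show "VH_linear VH_shift_inverse"
    unfolding VH_linear_def
  proof (intro conjI ballI allI)
    fix f g assume f: "f \<in> VH" and g: "g \<in> VH"
    show "VH_shift_inverse (\<lambda>z. f z + g z) = (\<lambda>z. VH_shift_inverse f z + VH_shift_inverse g z)"
      using VH_shift_add VH_shift_inverse_VH[OF f] VH_shift_inverse_VH[OF g]
      by (intro VH_shift_inverse_eq VH_add) auto
  next
    fix c f assume f: "f \<in> VH"
    show "VH_shift_inverse (\<lambda>z. c * f z) = (\<lambda>z. c * VH_shift_inverse f z)"
      using VH_shift_cmult VH_shift_inverse_VH[OF f] by (intro VH_shift_inverse_eq VH_cmult) auto
  qed (use VH_shift_inverse_VH in blast)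
  show "\<exists>C. \<forall>f\<in>Hv k. VH_shift_inverse f \<in> Hv k \<and> Hv_norm k (VH_shift_inverse f) \<le> C * Hv_norm k f" for k
    using VH_shift_inverse_Hv by blast
qed

lemma in_VH_resolventI: "l \<in> VH_resolvent T"
  unfolding VH_resolvent_def
proof (intro CollectI exI[of _ VH_shift_inverse] conjI ballI VH_shift_inverse_cont_op)
  fix f assume f: "f \<in> VH"
  show "VH_shift_inverse (\<lambda>z. l * f z - T f z) = f"
    using VH_shift_inverse_eq[OF f] by (simp add: VH_shift_def)
  show "(\<lambda>z. l * VH_shift_inverse f z - T (VH_shift_inverse f) z) = f"
    using VH_shift_inverse_VH[OF f] by (simp add: VH_shift_def)
qed

end

section \<open>The generalized Cesaro operator\<close>

lemma one_minus_in_unit_disc: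
  fixes w :: complex
  assumes "norm w < 1"
  shows "0 < Re (1 - w)" "1 - w \<notin> \<real>\<^sub>\<le>\<^sub>0" "1 - w \<noteq> 0"
    "1 - norm w \<le> norm (1 - w)" "norm (1 - w) \<le> 2"
proof -
  have "Re w \<le> norm w" by (rule complex_Re_le_cmod)
  thus re: "0 < Re (1 - w)" using assms by simp
  thus "1 - w \<notin> \<real>\<^sub>\<le>\<^sub>0" by (auto simp: complex_nonpos_Reals_iff)
  show "1 - w \<noteq> 0" using re by auto
  show "1 - norm w \<le> norm (1 - w)" using norm_triangle_ineq2[of 1 w] by simp
  show "norm (1 - w) \<le> 2" using norm_triangle_ineq4[of 1 w] assms by simp
qed

lemma one_minus_tz_bounds:
  fixes z :: complex
  assumes "0 \<le> t" "t < 1" "norm z < 1"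
  shows "1 - t \<le> norm (1 - of_real t * z)" "1 - of_real t * z \<notin> \<real>\<^sub>\<le>\<^sub>0"
    "1 - of_real t * z \<noteq> 0" "norm (1 - of_real t * z) \<le> 2"
proof -
  have "norm (of_real t * z) = t * norm z" using assms(1) by (simp add: norm_mult)
  hence tz: "norm (of_real t * z) \<le> t" using assms by (simp add: mult_left_le)
  hence "norm (of_real t * z) < 1" using assms by simp
  note * = one_minus_in_unit_disc[OF this]
  show "1 - t \<le> norm (1 - of_real t * z)" using *(4) tz by linarith
  show "1 - of_real t * z \<notin> \<real>\<^sub>\<le>\<^sub>0" "1 - of_real t * z \<noteq> 0" "norm (1 - of_real t * z) \<le> 2"
    using * by auto
qed

lemma holomorphic_on_ball_primitive:
  assumes "g holomorphic_on ball a r"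
  obtains G where "\<And>x. x \<in> ball a r \<Longrightarrow> (G has_field_derivative g x) (at x)"
proof -
  obtain G where "\<And>x. x \<in> ball a r \<Longrightarrow> (G has_field_derivative g x) (at x within ball a r)"
    using holomorphic_convex_primitive'[OF convex_ball open_ball assms] by blast
  thus ?thesis using that at_within_open[OF _ open_ball] by metis
qed

lemma Ces_outside: "1 \<le> norm z \<Longrightarrow> Ces t f z = 0"
  by (auto simp: Ces_def)

lemma Ces_at_0: "Ces t f 0 = f 0"
  by (simp add: Ces_def)

lemma has_contour_integral_radius_primitive:
  assumes "\<And>x. x \<in> ball 0 1 \<Longrightarrow> (G has_field_derivative g x) (at x)" "z \<in> ball 0 1"
  shows "(g has_contour_integral (G z - G 0)) (linepath 0 z)"
proof -
  have "closed_segment 0 z \<subseteq> ball 0 1"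
    using assms(2) by (intro closed_segment_subset) auto
  thus ?thesis
    using contour_integral_primitive[of "ball 0 1" G g "linepath 0 z"] assms(1)
    by (auto intro: has_field_derivative_at_within)
qed

lemma Ces_times_z:
  assumes G: "\<And>x. x \<in> ball 0 1 \<Longrightarrow> (G has_field_derivative f x / (1 - of_real t * x)) (at x)"
    and z: "z \<in> ball 0 1"
  shows "z * Ces t f z = G z - G 0"
proof (cases "z = 0")
  case False
  thus ?thesis using z contour_integral_unique[OF has_contour_integral_radius_primitive[OF G z]]
    by (simp add: Ces_def)
qed simp

lemma Ces_primitive:
  assumes "0 \<le> t" "t < 1" "f holomorphic_on ball 0 1"
  obtains G where "\<And>x. x \<in> ball 0 1 \<Longrightarrow> (G has_field_derivative f x / (1 - of_real t * x)) (at x)"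
proof -
  have "(\<lambda>x. f x / (1 - of_real t * x)) holomorphic_on ball 0 1"
    using assms one_minus_tz_bounds(3)[OF assms(1,2)] by (intro holomorphic_intros) auto
  thus ?thesis using holomorphic_on_ball_primitive that by blast
qed

lemma has_field_derivative_times_Ces:
  assumes "0 \<le> t" "t < 1" "f holomorphic_on ball 0 1" "z \<in> ball 0 1"
  shows "((\<lambda>x. x * Ces t f x) has_field_derivative f z / (1 - of_real t * z)) (at z)"
proof -
  obtain G where G: "\<And>x. x \<in> ball 0 1 \<Longrightarrow> (G has_field_derivative f x / (1 - of_real t * x)) (at x)"
    using Ces_primitive[OF assms(1-3)] by blast
  have "((\<lambda>x. G x - G 0) has_field_derivative f z / (1 - of_real t * z)) (at z)"
    using G[OF assms(4)] by (auto intro!: derivative_eq_intros)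
  thus ?thesis
    by (rule has_field_derivative_transform_within_open[OF _ open_ball assms(4)])
       (use Ces_times_z[OF G] in auto)
qed

lemma holomorphic_on_Ces:
  assumes "0 \<le> t" "t < 1" "f holomorphic_on ball 0 1"
  shows "Ces t f holomorphic_on ball 0 1"
proof -
  obtain G where G: "\<And>x. x \<in> ball 0 1 \<Longrightarrow> (G has_field_derivative f x / (1 - of_real t * x)) (at x)"
    using Ces_primitive[OF assms] by blast
  have "G holomorphic_on ball 0 1"
    using G by (metis holomorphic_on_open open_ball)
  hence P: "(\<lambda>z. if z = 0 then deriv G 0 else (G z - G 0) / (z - 0)) holomorphic_on ball 0 1"
    by (rule pole_lemma) auto
  have "deriv G 0 = f 0" using DERIV_imp_deriv[OF G[of 0]] by simp
  moreover have "Ces t f z = (G z - G 0) / z" if "z \<in> ball 0 1" "z \<noteq> 0" for z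
    using Ces_times_z[OF G that(1)] that(2) by (simp add: field_simps)
  ultimately show ?thesis
    by (intro holomorphic_transform[OF P]) (auto simp: Ces_at_0)
qed

lemma Ces_eqI:
  assumes "\<phi> holomorphic_on ball 0 1"
    and deriv: "\<And>x. x \<in> ball 0 1 \<Longrightarrow>
      ((\<lambda>x. x * \<phi> x) has_field_derivative f x / (1 - of_real t * x)) (at x)"
    and z: "z \<in> ball 0 1"
  shows "Ces t f z = \<phi> z"
proof (cases "z = 0")
  case False
  thus ?thesis using Ces_times_z[OF deriv z] by simp
next
  case True
  have "(\<phi> has_field_derivative deriv \<phi> 0) (at 0)"
    using assms(1) by (intro holomorphic_derivI[of _ "ball 0 1"]) auto
  hence "((\<lambda>x. x * \<phi> x) has_field_derivative \<phi> 0) (at 0)"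
    by (auto intro!: derivative_eq_intros)
  hence "\<phi> 0 = f 0" using DERIV_unique[OF _ deriv[of 0]] by simp
  thus ?thesis using True by (simp add: Ces_at_0)
qed

lemma Ces_eqD:
  assumes "0 \<le> t" "t < 1" "g holomorphic_on ball 0 1"
    and eq: "\<And>x. x \<in> ball 0 1 \<Longrightarrow> Ces t g x = F x"
    and z: "z \<in> ball 0 1"
    and D: "((\<lambda>x. x * F x) has_field_derivative D) (at z)"
  shows "g z = (1 - of_real t * z) * D"
proof -
  have "((\<lambda>x. x * F x) has_field_derivative g z / (1 - of_real t * z)) (at z)"
    by (rule has_field_derivative_transform_within_open[OF
          has_field_derivative_times_Ces[OF assms(1-3) z] open_ball z]) (simp add: eq)
  hence "D = g z / (1 - of_real t * z)" using DERIV_unique[OF D] by blast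
  thus ?thesis using one_minus_tz_bounds(3)[OF assms(1,2), of z] z by simp
qed

lemma Ces_add:
  assumes "0 \<le> t" "t < 1" "f holomorphic_on ball 0 1" "g holomorphic_on ball 0 1"
  shows "Ces t (\<lambda>z. f z + g z) = (\<lambda>z. Ces t f z + Ces t g z)"
proof
  fix z :: complex
  show "Ces t (\<lambda>z. f z + g z) z = Ces t f z + Ces t g z"
  proof (cases "z \<in> ball 0 1")
    case True
    show ?thesis
    proof (rule Ces_eqI[OF _ _ True])
      show "(\<lambda>z. Ces t f z + Ces t g z) holomorphic_on ball 0 1"
        using holomorphic_on_Ces assms by (intro holomorphic_intros) auto
      show "((\<lambda>x. x * (Ces t f x + Ces t g x)) has_field_derivative
          (f x + g x) / (1 - of_real t * x)) (at x)" if "x \<in> ball 0 1" for x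
        using DERIV_add[OF has_field_derivative_times_Ces[OF assms(1-3) that]
                           has_field_derivative_times_Ces[OF assms(1,2,4) that]]
        by (simp add: distrib_left add_divide_distrib)
    qed
  qed (simp add: Ces_outside)
qed

lemma Ces_cmult:
  assumes "0 \<le> t" "t < 1" "f holomorphic_on ball 0 1"
  shows "Ces t (\<lambda>z. c * f z) = (\<lambda>z. c * Ces t f z)"
proof
  fix z :: complex
  show "Ces t (\<lambda>z. c * f z) z = c * Ces t f z"
  proof (cases "z \<in> ball 0 1")
    case True
    show ?thesis
    proof (rule Ces_eqI[OF _ _ True])
      show "(\<lambda>z. c * Ces t f z) holomorphic_on ball 0 1"
        using holomorphic_on_Ces assms by (intro holomorphic_intros) auto
      show "((\<lambda>x. x * (c * Ces t f x)) has_field_derivative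
          (c * f x) / (1 - of_real t * x)) (at x)" if "x \<in> ball 0 1" for x
        using DERIV_cmult[OF has_field_derivative_times_Ces[OF assms that], of c]
        by (simp add: algebra_simps)
    qed
  qed (simp add: Ces_outside)
qed

lemma Ces_weighted_bound:
  assumes "0 \<le> t" "t < 1" "f \<in> Hv k" "z \<in> ball 0 1"
  shows "wvk k z * norm (Ces t f z) \<le> Hv_norm k f / (1 - t)"
proof -
  define N where "N = Hv_norm k f"
  have N0: "0 \<le> N" using Hv_norm_nonneg[OF assms(3)] by (simp add: N_def)
  have wz: "0 < wvk k z" "wvk k z \<le> 1" using wvk_pos_le_one assms(4) by auto
  obtain G where G: "\<And>x. x \<in> ball 0 1 \<Longrightarrow> (G has_field_derivative f x / (1 - of_real t * x)) (at x)"
    using Ces_primitive[OF assms(1,2) HvD(1)[OF assms(3)]] by blast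
  define B where "B = N / (wvk k z * (1 - t))"
  have B0: "0 \<le> B" using N0 wz assms by (simp add: B_def)
  have seg: "closed_segment 0 z \<subseteq> ball 0 1" "closed_segment 0 z \<subseteq> cball 0 (norm z)"
    using assms(4) by (intro closed_segment_subset; simp)+
  have "norm (G z - G 0) \<le> B * norm (z - 0)"
    using has_contour_integral_radius_primitive[OF G assms(4)]
  proof (rule has_contour_integral_bound_linepath[OF _ B0])
    fix x assume x: "x \<in> closed_segment 0 z"
    have xb: "x \<in> ball 0 1" and xz: "norm x \<le> norm z" using seg x by auto
    \<comment> \<open>the weight decreases along the radius, so \<open>v\<^sub>k(z)\<close> bounds the integrand uniformly\<close>
    have "wvk k z * norm (f x) \<le> wvk k x * norm (f x)"
      using wvk_antimono[OF xz] assms(4) by (intro mult_right_mono) auto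
    also have "\<dots> \<le> N" using Hv_norm_upper[OF assms(3) xb] by (simp add: N_def)
    finally have "norm (f x) \<le> N / wvk k z" using wz by (simp add: le_divide_eq mult.commute)
    moreover have "1 - t \<le> norm (1 - of_real t * x)" using one_minus_tz_bounds(1)[OF assms(1,2)] xb by auto
    ultimately have "norm (f x) / norm (1 - of_real t * x) \<le> (N / wvk k z) / (1 - t)"
      using assms(2) N0 wz by (intro frac_le) auto
    thus "norm (f x / (1 - of_real t * x)) \<le> B" by (simp add: B_def norm_divide)
  qed
  hence "norm z * norm (Ces t f z) \<le> B * norm z"
    using Ces_times_z[OF G assms(4)] by (metis norm_mult diff_0_right)
  show ?thesis
  proof (cases "z = 0")
    case True
    have "wvk k z * norm (Ces t f z) \<le> N"
      using Hv_norm_upper[OF assms(3,4)] True by (simp add: Ces_at_0 N_def)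
    also have "N \<le> N / (1 - t)" using N0 assms by (simp add: le_divide_eq mult_left_le)
    finally show ?thesis by (simp add: N_def)
  next
    case False
    hence "norm (Ces t f z) \<le> B" using \<open>norm z * norm (Ces t f z) \<le> B * norm z\<close>
      by (simp add: mult.commute)
    hence "wvk k z * norm (Ces t f z) \<le> wvk k z * B" using wz by (intro mult_left_mono) auto
    also have "\<dots> = N / (1 - t)" using wz by (simp add: B_def)
    finally show ?thesis by (simp add: N_def)
  qed
qed

lemma Ces_Hv:
  assumes "0 \<le> t" "t < 1" "f \<in> Hv k"
  shows "Ces t f \<in> Hv k" "Hv_norm k (Ces t f) \<le> (1 / (1 - t)) * Hv_norm k f"
proof -
  show "Ces t f \<in> Hv k"
    using holomorphic_on_Ces[OF assms(1,2) HvD(1)[OF assms(3)]] Ces_outside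
      Ces_weighted_bound[OF assms] by (rule HvI)
  show "Hv_norm k (Ces t f) \<le> (1 / (1 - t)) * Hv_norm k f"
    using Ces_weighted_bound[OF assms] by (intro Hv_norm_least) simp
qed

lemma VH_cont_op_Ces:
  assumes "0 \<le> t" "t < 1"
  shows "VH_cont_op (Ces t)"
proof (rule VH_cont_opI)
  have "Ces t f \<in> VH" if "f \<in> VH" for f
    using Ces_Hv(1)[OF assms] that by (auto simp: mem_VH_iff)
  thus "VH_linear (Ces t)"
    unfolding VH_linear_def using Ces_add[OF assms] Ces_cmult[OF assms] holomorphic_on_VH by blast
  show "\<exists>C. \<forall>f\<in>Hv k. Ces t f \<in> Hv k \<and> Hv_norm k (Ces t f) \<le> C * Hv_norm k f" for k
    using Ces_Hv[OF assms] by blast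
qed

section \<open>Point spectrum\<close>

lemma holomorphic_factor_at_0:
  assumes "f holomorphic_on ball 0 1" "\<exists>z\<in>ball 0 1. f z \<noteq> 0"
  obtains m r g where "0 < r" "ball 0 r \<subseteq> ball (0::complex) 1" "g holomorphic_on ball 0 r" "g 0 \<noteq> 0"
    "\<And>z. z \<in> ball 0 r \<Longrightarrow> f z = z ^ m * g z"
proof (cases "f 0 = 0")
  case False
  show ?thesis by (rule that[where m=0 and r=1 and g=f]) (use assms False in auto)
next
  case True
  have "\<not> f constant_on ball 0 1"
  proof
    assume "f constant_on ball 0 1"
    then obtain y where "\<forall>x\<in>ball 0 1. f x = y" by (auto simp: constant_on_def)
    hence "\<forall>x\<in>ball 0 1. f x = 0" using True by (metis centre_in_ball zero_less_one)
    with assms(2) show False by blast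
  qed
  then obtain g r n where r: "0 < r" "ball 0 r \<subseteq> ball (0::complex) 1" and g: "g holomorphic_on ball 0 r"
      and fg: "\<And>w. w \<in> ball 0 r \<Longrightarrow> f w = (w - 0) ^ n * g w"
      and g0: "\<And>w. w \<in> ball 0 r \<Longrightarrow> g w \<noteq> 0"
    using holomorphic_factor_zero_nonconstant[OF assms(1) open_ball connected_ball _ True]
    by (metis centre_in_ball zero_less_one)
  show ?thesis using g0[of 0] fg r(1) by (intro that[OF r g]) auto
qed

lemma power_mult_eq_0_imp_eq_0_at_0:
  fixes Q :: "complex \<Rightarrow> complex"
  assumes "0 < r" "continuous_on (ball 0 r) Q" "\<And>z. z \<in> ball 0 r \<Longrightarrow> z ^ m * Q z = 0"
  shows "Q 0 = 0"
proof -
  have "(Q \<longlongrightarrow> Q 0) (at 0)"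
    using assms(1,2) continuous_on_eq_continuous_at[OF open_ball, of 0 r Q] by (simp add: isCont_def)
  moreover have "eventually (\<lambda>z. Q z = 0) (at 0)"
    unfolding eventually_at using assms(1,3) by (intro exI[of _ r]) (auto simp: dist_norm)
  hence "(Q \<longlongrightarrow> 0) (at 0)" by (rule tendsto_eventually)
  ultimately show ?thesis using tendsto_unique[OF at_neq_bot] by metis
qed

lemma Ces_eigenvalue:
  assumes t: "0 \<le> t" "t < 1" and f: "f holomorphic_on ball 0 1" "\<exists>z\<in>ball 0 1. f z \<noteq> 0"
    and eigen: "\<And>z. z \<in> ball 0 1 \<Longrightarrow> Ces t f z = l * f z"
  shows "\<exists>m. l = 1 / of_nat (m + 1)"
proof -
  have fd: "(f has_field_derivative deriv f z) (at z)" if "z \<in> ball 0 1" for z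
    using f(1) that by (intro holomorphic_derivI[of _ "ball 0 1"]) auto
  have ode: "f z = (1 - of_real t * z) * (l * (f z + z * deriv f z))" if z: "z \<in> ball 0 1" for z
  proof -
    have "f z = (1 - of_real t * z) * (1 * (l * f z) + l * deriv f z * z)"
      by (rule Ces_eqD[OF t f(1) eigen z DERIV_mult[OF DERIV_ident DERIV_cmult[OF fd[OF z]]]])
    thus ?thesis by (simp add: algebra_simps)
  qed
  obtain m r g where r: "0 < r" "ball 0 r \<subseteq> ball (0::complex) 1" and g: "g holomorphic_on ball 0 r" "g 0 \<noteq> 0"
    and fg: "\<And>z. z \<in> ball 0 r \<Longrightarrow> f z = z ^ m * g z"
    by (rule holomorphic_factor_at_0[OF f]) (rule that; assumption)
  have gd: "(g has_field_derivative deriv g z) (at z)" if "z \<in> ball 0 r" for z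
    using g(1) that by (intro holomorphic_derivI[of _ "ball 0 r"]) auto
  define Q where "Q z = g z - (1 - of_real t * z) * (l * (of_nat (m + 1) * g z + z * deriv g z))" for z
  have Q_vanishes: "z ^ m * Q z = 0" if z: "z \<in> ball 0 r" for z
  proof -
    have zb: "z \<in> ball 0 1" using z r by auto
    have "((\<lambda>z. z * f z) has_field_derivative f z + z * deriv f z) (at z)"
      using fd[OF zb] by (auto intro!: derivative_eq_intros)
    hence "((\<lambda>z. z ^ (m + 1) * g z) has_field_derivative f z + z * deriv f z) (at z)"
      by (rule has_field_derivative_transform_within_open[OF _ open_ball z]) (simp add: fg)
    moreover have "((\<lambda>z. z ^ (m + 1) * g z) has_field_derivative
        of_nat (m + 1) * (1 * z ^ (m + 1 - Suc 0)) * g z + deriv g z * z ^ (m + 1)) (at z)"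
      by (rule DERIV_mult[OF DERIV_power[OF DERIV_ident] gd[OF z]])
    ultimately have "f z + z * deriv f z = of_nat (m + 1) * (1 * z ^ (m + 1 - Suc 0)) * g z + deriv g z * z ^ (m + 1)"
      by (rule DERIV_unique)
    hence "f z + z * deriv f z = z ^ m * (of_nat (m + 1) * g z + z * deriv g z)"
      by (simp add: algebra_simps)
    hence "z ^ m * Q z = f z - (1 - of_real t * z) * (l * (f z + z * deriv f z))"
      by (simp add: Q_def fg[OF z] algebra_simps)
    thus ?thesis using ode[OF zb] by simp
  qed
  have "continuous_on (ball 0 r) Q"
    unfolding Q_def using g(1) holomorphic_deriv[OF g(1) open_ball]
    by (intro holomorphic_on_imp_continuous_on holomorphic_intros) auto
  hence "Q 0 = 0" using power_mult_eq_0_imp_eq_0_at_0[OF r(1) _ Q_vanishes] by blast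
  moreover have "Q 0 = g 0 * (1 - l * of_nat (m + 1))" by (simp add: Q_def algebra_simps)
  ultimately have "l * of_nat (m + 1) = 1" using g(2) by simp
  hence "l = 1 / of_nat (m + 1)" by (simp add: eq_divide_eq del: of_nat_Suc)
  thus ?thesis by blast
qed

definition Ces_eigenfunction :: "real \<Rightarrow> nat \<Rightarrow> complex \<Rightarrow> complex" where
  "Ces_eigenfunction t m z = (if norm z < 1 then z ^ m / (1 - of_real t * z) ^ (m + 1) else 0)"

lemma Ces_eigenfunction_Hv:
  assumes "0 \<le> t" "t < 1"
  shows "Ces_eigenfunction t m \<in> Hv 0"
proof (rule HvI)
  have "(\<lambda>z. z ^ m / (1 - of_real t * z) ^ (m + 1)) holomorphic_on ball 0 1"
    using one_minus_tz_bounds(3)[OF assms] by (intro holomorphic_intros) auto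
  thus "Ces_eigenfunction t m holomorphic_on ball 0 1"
    by (rule holomorphic_transform) (simp add: Ces_eigenfunction_def)
  fix z :: complex assume z: "z \<in> ball 0 1"
  have "(1 - t) ^ (m + 1) \<le> norm (1 - of_real t * z) ^ (m + 1)"
    using one_minus_tz_bounds(1)[OF assms, of z] z assms by (intro power_mono) auto
  moreover have "norm z ^ m \<le> 1" using z by (simp add: power_le_one)
  ultimately have "norm z ^ m / norm (1 - of_real t * z) ^ (m + 1) \<le> 1 / (1 - t) ^ (m + 1)"
    using assms by (intro frac_le) auto
  thus "wvk 0 z * norm (Ces_eigenfunction t m z) \<le> 1 / (1 - t) ^ (m + 1)"
    using z by (simp add: Ces_eigenfunction_def wvk_def norm_divide norm_power del: power_Suc)
qed (simp add: Ces_eigenfunction_def)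

lemma Ces_eigenfunction_nonzero:
  assumes "0 \<le> t" "t < 1"
  shows "Ces_eigenfunction t m \<noteq> (\<lambda>z. 0)"
proof
  assume "Ces_eigenfunction t m = (\<lambda>z. 0)"
  hence "Ces_eigenfunction t m (1/2) = 0" by simp
  thus False using one_minus_tz_bounds(3)[OF assms, of "1/2"] by (simp add: Ces_eigenfunction_def)
qed

lemma Ces_Ces_eigenfunction:
  assumes t: "0 \<le> t" "t < 1"
  shows "Ces t (Ces_eigenfunction t m) = (\<lambda>z. Ces_eigenfunction t m z / of_nat (m + 1))"
proof
  fix z :: complex
  define \<phi> where "\<phi> x = x ^ m / (1 - of_real t * x) ^ (m + 1) / of_nat (m + 1)" for x :: complex
  show "Ces t (Ces_eigenfunction t m) z = Ces_eigenfunction t m z / of_nat (m + 1)"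
  proof (cases "z \<in> ball 0 1")
    case True
    have "Ces t (Ces_eigenfunction t m) z = \<phi> z"
    proof (rule Ces_eqI[OF _ _ True])
      show "\<phi> holomorphic_on ball 0 1"
        unfolding \<phi>_def using one_minus_tz_bounds(3)[OF t] by (intro holomorphic_intros) auto
      fix x :: complex assume x: "x \<in> ball 0 1"
      define d where "d = 1 - of_real t * x"
      have d: "d \<noteq> 0" using one_minus_tz_bounds(3)[OF t] x by (auto simp: d_def)
      have "((\<lambda>x. x / (1 - of_real t * x)) has_field_derivative 1 / d ^ 2) (at x)"
        using d unfolding d_def by (auto intro!: derivative_eq_intros simp: field_simps power2_eq_square)
      from DERIV_power[OF this, of "m + 1"]
      have "((\<lambda>x. (x / (1 - of_real t * x)) ^ (m + 1)) has_field_derivative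
          of_nat (m + 1) * (x / d) ^ (m + 1 - 1) * (1 / d ^ 2)) (at x)"
        by (simp add: d_def)
      hence "((\<lambda>x. (x / (1 - of_real t * x)) ^ (m + 1) / of_nat (m + 1)) has_field_derivative
          of_nat (m + 1) * (x / d) ^ (m + 1 - 1) * (1 / d ^ 2) / of_nat (m + 1)) (at x)"
        by (rule DERIV_cdivide)
      moreover have "of_nat (m + 1) * (x / d) ^ (m + 1 - 1) * (1 / d ^ 2) / of_nat (m + 1)
          = (x / d) ^ m / (d ^ 2 :: complex)"
        by (simp del: of_nat_Suc)
      ultimately have "((\<lambda>x. (x / (1 - of_real t * x)) ^ (m + 1) / of_nat (m + 1)) has_field_derivative
          (x / d) ^ m / d ^ 2) (at x)" by simp
      moreover have "(\<lambda>x. (x / (1 - of_real t * x)) ^ (m + 1) / of_nat (m + 1)) = (\<lambda>x. x * \<phi> x)"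
        by (simp add: \<phi>_def fun_eq_iff power_divide del: of_nat_Suc)
      moreover have "(x / d) ^ m / d ^ 2 = Ces_eigenfunction t m x / (1 - of_real t * x)"
        using x d by (simp add: Ces_eigenfunction_def d_def power_divide power2_eq_square)
      ultimately show "((\<lambda>x. x * \<phi> x) has_field_derivative
          Ces_eigenfunction t m x / (1 - of_real t * x)) (at x)" by simp
    qed
    thus ?thesis using True by (simp add: \<phi>_def Ces_eigenfunction_def)
  qed (simp add: Ces_outside Ces_eigenfunction_def)
qed

lemma point_spectrum_Ces:
  assumes t: "0 \<le> t" "t < 1"
  shows "VH_point_spectrum (Ces t) = {1 / of_nat (m + 1) | m :: nat. True}"
proof (intro equalityI subsetI)
  fix l assume "l \<in> VH_point_spectrum (Ces t)"
  then obtain f where f: "f \<in> VH" "f \<noteq> (\<lambda>z. 0)" "(\<lambda>z. l * f z - Ces t f z) = (\<lambda>z. 0)"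
    unfolding VH_point_spectrum_def by blast
  have "\<exists>z\<in>ball 0 1. f z \<noteq> 0" using f(1,2) VH_eq_zero_iff by blast
  moreover have "Ces t f z = l * f z" for z using fun_cong[OF f(3), of z] by simp
  ultimately show "l \<in> {1 / of_nat (m + 1) | m :: nat. True}"
    using Ces_eigenvalue[OF t holomorphic_on_VH[OF f(1)]] by auto
next
  fix l :: complex assume "l \<in> {1 / of_nat (m + 1) | m :: nat. True}"
  then obtain m where l: "l = 1 / of_nat (m + 1)" by blast
  have "Ces_eigenfunction t m \<in> VH" using Ces_eigenfunction_Hv[OF t] by (auto simp: mem_VH_iff)
  thus "l \<in> VH_point_spectrum (Ces t)"
    unfolding VH_point_spectrum_def using Ces_eigenfunction_nonzero[OF t, of m]
    by (auto simp: l Ces_Ces_eigenfunction[OF t] fun_eq_iff)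
qed

section \<open>The Euler equation \<open>z \<Psi>' + b \<Psi> = \<psi>\<close>\<close>

lemma powr_le_ratio_powr_abs:
  fixes a e p q :: real
  assumes "0 < p" "p \<le> a" "a \<le> q" "p \<le> 1" "1 \<le> q"
  shows "a powr e \<le> (q / p) powr \<bar>e\<bar>"
proof (cases "0 \<le> e")
  case True
  have "a powr e \<le> q powr e" using assms True by (intro powr_mono2) auto
  also have "\<dots> \<le> (q / p) powr e" using assms True by (intro powr_mono2) (auto simp: field_simps)
  finally show ?thesis using True by simp
next
  case False
  have "a powr e = (1 / a) powr (- e)" using assms by (simp add: powr_divide powr_minus_divide)
  also have "\<dots> \<le> (q / p) powr (- e)"
  proof (rule powr_mono2)
    have "a * 1 \<le> a * q" using assms by (intro mult_left_mono) auto
    hence "p \<le> a * q" using assms by linarith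
    thus "1 / a \<le> q / p" using assms by (simp add: field_simps)
  qed (use assms False in auto)
  finally show ?thesis using False by simp
qed

lemma norm_of_nat_add_bounded_below:
  fixes b :: complex
  assumes "\<And>n. of_nat n + b \<noteq> 0"
  obtains \<beta> where "0 < \<beta>" "\<And>n. \<beta> \<le> norm (of_nat n + b)"
proof -
  define N where "N = nat \<lceil>\<bar>Re b\<bar>\<rceil> + 1"
  define \<beta> where "\<beta> = Min (insert 1 ((\<lambda>n. norm (of_nat n + b)) ` {..<N}))"
  have fin: "finite (insert 1 ((\<lambda>n. norm (of_nat n + b)) ` {..<N}))" by simp
  have "0 < \<beta>" unfolding \<beta>_def using assms by (subst Min_gr_iff[OF fin]) auto
  moreover have "\<beta> \<le> norm (of_nat n + b)" for n
  proof (cases "n < N")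
    case True thus ?thesis unfolding \<beta>_def by (intro Min_le[OF fin]) auto
  next
    case False
    \<comment> \<open>for large \<open>n\<close> already the real part is at least 1\<close>
    hence "\<bar>Re b\<bar> + 1 \<le> real n" unfolding N_def by linarith
    hence "1 \<le> \<bar>Re (of_nat n + b)\<bar>" by simp
    also have "\<dots> \<le> norm (of_nat n + b)" by (rule abs_Re_le_cmod)
    moreover have "\<beta> \<le> 1" unfolding \<beta>_def by (intro Min_le[OF fin]) auto
    ultimately show ?thesis by linarith
  qed
  ultimately show ?thesis using that by blast
qed

lemma Taylor_coeff_weighted_bound:
  assumes "\<psi> holomorphic_on ball 0 1" "\<And>z. z \<in> ball 0 1 \<Longrightarrow> wvk k z * norm (\<psi> z) \<le> M"
    and \<rho>: "0 < \<rho>" "\<rho> < 1"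
  shows "norm ((deriv ^^ n) \<psi> 0 / fact n) \<le> (M / wvk k (of_real \<rho>)) / \<rho> ^ n"
proof -
  have w: "0 < wvk k (of_real \<rho>)" using wvk_pos_le_one \<rho> by auto
  have "norm ((deriv ^^ n) \<psi> 0) \<le> fact n * (M / wvk k (of_real \<rho>)) / \<rho> ^ n"
  proof (rule Cauchy_inequality)
    show "\<psi> holomorphic_on ball 0 \<rho>" by (rule holomorphic_on_subset[OF assms(1)]) (use \<rho> in auto)
    show "continuous_on (cball 0 \<rho>) \<psi>"
      by (rule continuous_on_subset[OF holomorphic_on_imp_continuous_on[OF assms(1)]]) (use \<rho> in auto)
    fix x :: complex assume x: "norm (0 - x) = \<rho>"
    hence xb: "x \<in> ball 0 1" using \<rho> by auto
    have "wvk k (of_real \<rho>) \<le> wvk k x" using x \<rho> by (intro wvk_antimono) auto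
    hence "wvk k (of_real \<rho>) * norm (\<psi> x) \<le> M"
      using assms(2)[OF xb] by (meson mult_right_mono norm_ge_zero order_trans)
    thus "norm (\<psi> x) \<le> M / wvk k (of_real \<rho>)" using w by (simp add: le_divide_eq mult.commute)
  qed (use \<rho> in auto)
  thus ?thesis by (simp add: norm_divide field_simps)
qed

text \<open>Dividing the Taylor coefficients of \<open>\<psi>\<close> by \<open>n + b\<close> solves the equation termwise.\<close>

definition euler_coeff :: "complex \<Rightarrow> (complex \<Rightarrow> complex) \<Rightarrow> nat \<Rightarrow> complex" where
  "euler_coeff b \<psi> n = ((deriv ^^ n) \<psi> 0 / fact n) / (of_nat n + b)"

definition euler_solution :: "complex \<Rightarrow> (complex \<Rightarrow> complex) \<Rightarrow> complex \<Rightarrow> complex" where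
  "euler_solution b \<psi> z = (\<Sum>n. euler_coeff b \<psi> n * z ^ n)"

locale euler_equation =
  fixes b :: complex and \<beta> :: real and \<psi> :: "complex \<Rightarrow> complex" and k :: nat and M :: real
  assumes \<beta>: "0 < \<beta>" "\<And>n. \<beta> \<le> norm (of_nat n + b)"
    and holo: "\<psi> holomorphic_on ball 0 1"
    and bound: "\<And>z. z \<in> ball 0 1 \<Longrightarrow> wvk k z * norm (\<psi> z) \<le> M"
begin

lemma M_nonneg: "0 \<le> M"
proof -
  have "0 \<le> wvk k 0 * norm (\<psi> 0)" using wvk_pos_le_one[of 0 k] by simp
  also have "\<dots> \<le> M" using bound[of 0] by simp
  finally show ?thesis .
qed

lemma euler_coeff_bound:
  assumes "0 < \<rho>" "\<rho> < 1"
  shows "norm (euler_coeff b \<psi> n * z ^ n) \<le> (M / wvk k (of_real \<rho>)) / \<beta> * (norm z / \<rho>) ^ n"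
proof -
  have "0 < wvk k (of_real \<rho>)" using wvk_pos_le_one assms by auto
  hence "norm ((deriv ^^ n) \<psi> 0 / fact n) / norm (of_nat n + b) \<le> ((M / wvk k (of_real \<rho>)) / \<rho> ^ n) / \<beta>"
    using Taylor_coeff_weighted_bound[OF holo bound assms] \<beta> M_nonneg assms by (intro frac_le) auto
  hence "norm ((deriv ^^ n) \<psi> 0 / fact n) / norm (of_nat n + b) * norm z ^ n
      \<le> ((M / wvk k (of_real \<rho>)) / \<rho> ^ n) / \<beta> * norm z ^ n"
    by (rule mult_right_mono) simp
  also have "\<dots> = (M / wvk k (of_real \<rho>)) / \<beta> * (norm z / \<rho>) ^ n"
    by (simp add: power_divide)
  finally show ?thesis by (simp add: euler_coeff_def norm_mult norm_divide norm_power)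
qed

lemma summable_euler_series:
  assumes "norm z < 1"
  shows "summable (\<lambda>n. euler_coeff b \<psi> n * z ^ n)"
proof -
  define \<rho> where "\<rho> = (norm z + 1) / 2"
  have \<rho>: "0 < \<rho>" "\<rho> < 1" "norm z < \<rho>"
    using assms by (simp_all add: \<rho>_def field_simps add_pos_nonneg)
  have "summable (\<lambda>n. (M / wvk k (of_real \<rho>)) / \<beta> * (norm z / \<rho>) ^ n)"
    using \<rho> by (intro summable_mult summable_geometric) auto
  thus ?thesis by (rule summable_comparison_test'[OF _ euler_coeff_bound[OF \<rho>(1,2)]])
qed

lemma has_field_derivative_euler_solution:
  assumes "z \<in> ball 0 1"
  shows "(euler_solution b \<psi> has_field_derivative (\<Sum>n. diffs (euler_coeff b \<psi>) n * z ^ n)) (at z)"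
  unfolding euler_solution_def[abs_def]
  by (rule termdiffs_strong'[of 1]) (use assms summable_euler_series in auto)

lemma holomorphic_on_euler_solution: "euler_solution b \<psi> holomorphic_on ball 0 1"
  using has_field_derivative_euler_solution by (subst holomorphic_on_open[OF open_ball]) blast

lemma euler_solution_solves:
  assumes z: "z \<in> ball 0 1"
  shows "z * deriv (euler_solution b \<psi>) z + b * euler_solution b \<psi> z = \<psi> z"
proof -
  define c where "c = euler_coeff b \<psi>"
  have nz: "norm z < 1" using z by simp
  have "summable (\<lambda>n. diffs c n * z ^ n)"
    unfolding c_def by (rule termdiff_converges[of z 1]) (use nz summable_euler_series in auto)
  hence "(\<lambda>n. z * (diffs c n * z ^ n)) sums (z * deriv (euler_solution b \<psi>) z)"
    using DERIV_imp_deriv[OF has_field_derivative_euler_solution[OF z]]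
    by (metis c_def sums_mult summable_sums)
  moreover have "(\<lambda>n. z * (diffs c n * z ^ n)) = (\<lambda>n. of_nat (Suc n) * c (Suc n) * z ^ Suc n)"
    by (auto simp: diffs_def fun_eq_iff algebra_simps)
  ultimately have "(\<lambda>n. of_nat (Suc n) * c (Suc n) * z ^ Suc n) sums (z * deriv (euler_solution b \<psi>) z)"
    by simp
  hence "(\<lambda>n. of_nat n * c n * z ^ n) sums (z * deriv (euler_solution b \<psi>) z)"
    using sums_Suc_iff[of "\<lambda>n. of_nat n * c n * z ^ n"] by simp
  moreover have "(\<lambda>n. b * (c n * z ^ n)) sums (b * euler_solution b \<psi> z)"
    unfolding euler_solution_def c_def by (intro sums_mult summable_sums summable_euler_series nz)
  ultimately have "(\<lambda>n. of_nat n * c n * z ^ n + b * (c n * z ^ n)) sums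
      (z * deriv (euler_solution b \<psi>) z + b * euler_solution b \<psi> z)"
    by (rule sums_add)
  moreover have "of_nat n * c n * z ^ n + b * (c n * z ^ n) = (deriv ^^ n) \<psi> 0 / fact n * (z - 0) ^ n" for n
  proof -
    have "of_nat n + b \<noteq> 0" using \<beta>(1) \<beta>(2)[of n] by auto
    hence "(of_nat n + b) * c n = (deriv ^^ n) \<psi> 0 / fact n" by (simp add: c_def euler_coeff_def)
    moreover have "of_nat n * c n * z ^ n + b * (c n * z ^ n) = ((of_nat n + b) * c n) * z ^ n"
      by (simp add: algebra_simps)
    ultimately show ?thesis by simp
  qed
  ultimately show ?thesis
    using holomorphic_power_series[OF holo z] sums_unique2 by simp
qed

end

context euler_equation
begin

lemma euler_solution_near_0:
  assumes "norm z \<le> 1/4"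
  shows "norm (euler_solution b \<psi> z) \<le> 2 * M / \<beta>"
proof -
  have bound_n: "norm (euler_coeff b \<psi> n * z ^ n) \<le> M / \<beta> * (1/2) ^ n" for n
  proof -
    have "norm (euler_coeff b \<psi> n * z ^ n) \<le> (M / wvk k (of_real (1/2))) / \<beta> * (norm z / (1/2)) ^ n"
      by (rule euler_coeff_bound) auto
    also have "\<dots> = M / \<beta> * (2 * norm z) ^ n" by (simp add: wvk_eq_1)
    also have "\<dots> \<le> M / \<beta> * (1/2) ^ n"
      using assms M_nonneg \<beta>(1) by (intro mult_left_mono power_mono) auto
    finally show ?thesis .
  qed
  have "summable (\<lambda>n. M / \<beta> * (1/2::real) ^ n)" by (intro summable_mult summable_geometric) auto
  hence "norm (euler_solution b \<psi> z) \<le> (\<Sum>n. M / \<beta> * (1/2::real) ^ n)"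
    unfolding euler_solution_def by (rule norm_suminf_le[OF bound_n])
  also have "\<dots> = M / \<beta> * 2" by (subst suminf_mult) (auto simp: suminf_geometric)
  finally show ?thesis by (simp add: mult.commute)
qed

text \<open>Away from 0 the series gives no uniform control; instead \<open>w\<^sup>b \<Psi>(w u)\<close> has
  derivative \<open>w\<^sup>b \<psi>(w u) / w\<close> along the ray through the unit vector \<open>u\<close>,
  which is integrated from \<open>1/4\<close> to \<open>|z|\<close>.\<close>

lemma has_field_derivative_integrating_factor:
  assumes "0 < s" "norm u = 1" "s < 1"
  shows "((\<lambda>w. w powr b * euler_solution b \<psi> (w * u)) has_field_derivative
      of_real s powr b / of_real s * \<psi> (of_real s * u)) (at (of_real s))"
proof -
  define \<Psi> where "\<Psi> = euler_solution b \<psi>"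
  define w :: complex where "w = of_real s"
  have w: "w \<notin> \<real>\<^sub>\<le>\<^sub>0" "w \<noteq> 0" using assms(1) by (auto simp: w_def complex_nonpos_Reals_iff)
  have wu: "w * u \<in> ball 0 1" using assms by (simp add: w_def norm_mult)
  have "(\<Psi> has_field_derivative deriv \<Psi> (w * u)) (at (w * u))"
    unfolding \<Psi>_def using has_field_derivative_euler_solution[OF wu] DERIV_imp_deriv by metis
  from DERIV_mult[OF has_field_derivative_powr[OF w(1)]
         DERIV_chain2[OF this DERIV_cmult_right[OF DERIV_ident, of u]]]
  have D: "((\<lambda>w. w powr b * \<Psi> (w * u)) has_field_derivative
      b * w powr (b - 1) * \<Psi> (w * u) + deriv \<Psi> (w * u) * (1 * u) * w powr b) (at w)" .
  have "b * w powr (b - 1) * \<Psi> (w * u) + deriv \<Psi> (w * u) * (1 * u) * w powr b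
      = w powr b / w * ((w * u) * deriv \<Psi> (w * u) + b * \<Psi> (w * u))"
    using w(2) by (simp add: powr_diff field_simps)
  also have "\<dots> = w powr b / w * \<psi> (w * u)"
    unfolding \<Psi>_def euler_solution_solves[OF wu] ..
  finally have eq: "b * w powr (b - 1) * \<Psi> (w * u) + deriv \<Psi> (w * u) * (1 * u) * w powr b
      = w powr b / w * \<psi> (w * u)" .
  from D[unfolded eq] show ?thesis by (simp add: \<Psi>_def w_def)
qed

lemma integrating_factor_derivative_bound:
  assumes u: "norm u = 1" and s: "1/4 \<le> s" "s \<le> r" and r: "r < 1"
  shows "norm (of_real s powr b / of_real s * \<psi> (of_real s * u))
    \<le> 4 powr \<bar>Re b\<bar> * 4 * (M / wvk k (of_real r * u))"
proof -
  have su: "of_real s * u \<in> ball 0 1" "norm (of_real s * u) = s" using u s r by (auto simp: norm_mult)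
  have ru: "norm (of_real r * u) = r" using u s by (simp add: norm_mult)
  have w: "0 < wvk k (of_real r * u)" using wvk_pos_le_one ru r by auto
  have "wvk k (of_real r * u) \<le> wvk k (of_real s * u)"
    using su(2) ru s r by (intro wvk_antimono) auto
  hence "wvk k (of_real r * u) * norm (\<psi> (of_real s * u)) \<le> wvk k (of_real s * u) * norm (\<psi> (of_real s * u))"
    by (rule mult_right_mono) simp
  also have "\<dots> \<le> M" by (rule bound[OF su(1)])
  finally have "norm (\<psi> (of_real s * u)) \<le> M / wvk k (of_real r * u)"
    using w by (simp add: le_divide_eq mult.commute)
  moreover have "norm (complex_of_real s powr b) \<le> 4 powr \<bar>Re b\<bar>"
    using powr_le_ratio_powr_abs[of "1/4" s 1 "Re b"] s r by (simp add: norm_powr_real_powr)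
  moreover have "norm (1 / complex_of_real s) \<le> 4" using s by (simp add: norm_divide field_simps)
  ultimately have "norm (complex_of_real s powr b) * norm (1 / complex_of_real s) * norm (\<psi> (of_real s * u))
      \<le> 4 powr \<bar>Re b\<bar> * 4 * (M / wvk k (of_real r * u))"
    by (intro mult_mono) auto
  thus ?thesis by (simp add: norm_mult norm_divide)
qed

lemma euler_solution_far:
  assumes z: "z \<in> ball 0 1" "1/4 < norm z"
  defines "K \<equiv> 4 powr \<bar>Re b\<bar>"
  shows "norm (euler_solution b \<psi> z) \<le> K * (K * (2 * M / \<beta>) + K * 4 * (M / wvk k z))"
proof -
  define r where "r = norm z"
  have r: "1/4 < r" "r < 1" using z by (auto simp: r_def)
  define u where "u = z / of_real r"
  have u: "norm u = 1" "of_real r * u = z" using r by (auto simp: u_def r_def norm_divide)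
  define \<phi> where "\<phi> = (\<lambda>w. w powr b * euler_solution b \<psi> (w * u))"
  have wz: "0 < wvk k z" using wvk_pos_le_one z by auto
  have K: "s powr Re b \<le> K" "s powr (- Re b) \<le> K" if "1/4 \<le> s" "s \<le> 1" for s :: real
    using powr_le_ratio_powr_abs[of "1/4" s 1 "Re b"] powr_le_ratio_powr_abs[of "1/4" s 1 "- Re b"] that
    by (simp_all add: K_def)
  define B where "B = K * 4 * (M / wvk k z)"
  have B0: "0 \<le> B" using wz M_nonneg by (simp add: B_def K_def)
  define S where "S = closed_segment (complex_of_real (1/4)) (of_real r)"
  have "norm (\<phi> (of_real r) - \<phi> (of_real (1/4))) \<le> B * norm (complex_of_real r - of_real (1/4))"
  proof (rule field_differentiable_bound[of S])
    fix w assume "w \<in> S"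
    then obtain s where "s \<in> closed_segment (1/4) r" "w = of_real s"
      unfolding S_def closed_segment_of_real by blast
    hence s: "w = of_real s" "1/4 \<le> s" "s \<le> r" using r by (auto simp: closed_segment_eq_real_ivl)
    have "((\<lambda>w. w powr b * euler_solution b \<psi> (w * u)) has_field_derivative
        of_real s powr b / of_real s * \<psi> (of_real s * u)) (at (of_real s))"
      by (rule has_field_derivative_integrating_factor) (use s r u in auto)
    thus "(\<phi> has_field_derivative (w powr b / w * \<psi> (w * u))) (at w within S)"
      unfolding \<phi>_def s(1) by (rule has_field_derivative_at_within)
    show "norm (w powr b / w * \<psi> (w * u)) \<le> B"
      using integrating_factor_derivative_bound[OF u(1) s(2,3) r(2)] by (simp add: s(1) u(2) B_def K_def)
  qed (use B0 in \<open>auto simp: S_def\<close>)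
  also have "\<dots> \<le> B"
  proof -
    have "norm (complex_of_real r - of_real (1/4)) = \<bar>r - 1/4\<bar>"
      by (metis norm_of_real of_real_diff)
    thus ?thesis using r B0 by (simp add: mult_left_le)
  qed
  finally have "norm (\<phi> (of_real r)) \<le> norm (\<phi> (of_real (1/4))) + B"
    using norm_triangle_ineq2[of "\<phi> (of_real r)" "\<phi> (of_real (1/4))"] by linarith
  also have "norm (\<phi> (of_real (1/4))) \<le> K * (2 * M / \<beta>)"
  proof -
    have "norm (euler_solution b \<psi> (of_real (1/4) * u)) \<le> 2 * M / \<beta>"
      by (rule euler_solution_near_0) (simp add: norm_mult u)
    moreover have "norm (complex_of_real (1/4) powr b) \<le> K" using K(1)[of "1/4"] by (simp add: norm_powr_real_powr)
    ultimately show ?thesis unfolding \<phi>_def norm_mult by (intro mult_mono) (use M_nonneg \<beta> in \<open>auto simp: K_def\<close>)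
  qed
  finally have "r powr Re b * norm (euler_solution b \<psi> z) \<le> K * (2 * M / \<beta>) + B"
    using u r by (simp add: \<phi>_def norm_mult norm_powr_real_powr)
  hence "norm (euler_solution b \<psi> z) \<le> r powr (- Re b) * (K * (2 * M / \<beta>) + B)"
    using r by (simp add: powr_minus field_simps)
  also have "\<dots> \<le> K * (K * (2 * M / \<beta>) + B)"
    using K(2)[of r] r B0 M_nonneg \<beta>(1) by (intro mult_right_mono) (auto simp: K_def)
  finally show ?thesis by (simp add: B_def)
qed

lemma euler_solution_weighted_bound:
  assumes z: "z \<in> ball 0 1"
  shows "wvk k z * norm (euler_solution b \<psi> z) \<le> ((4 powr \<bar>Re b\<bar>) ^ 2 * (2 / \<beta> + 4)) * M"
proof -
  define K where "K = 4 powr \<bar>Re b\<bar>"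
  have "1 \<le> K" unfolding K_def by (simp add: ge_one_powr_ge_zero)
  hence K2: "1 \<le> K ^ 2" by (simp add: one_le_power)
  have wz: "0 < wvk k z" "wvk k z \<le> 1" using wvk_pos_le_one z by auto
  have M: "0 \<le> M" "0 \<le> 2 * M / \<beta>" using M_nonneg \<beta>(1) by auto
  show ?thesis
  proof (cases "norm z \<le> 1/4")
    case True
    have "wvk k z * norm (euler_solution b \<psi> z) \<le> 1 * (2 * M / \<beta>)"
      using euler_solution_near_0[OF True] wz by (intro mult_mono) auto
    also have "\<dots> \<le> K ^ 2 * (2 * M / \<beta> + 4 * M)"
      using K2 M by (intro mult_mono) auto
    finally show ?thesis by (simp add: K_def algebra_simps)
  next
    case False
    have "wvk k z * norm (euler_solution b \<psi> z)
        \<le> wvk k z * (K * (K * (2 * M / \<beta>) + K * 4 * (M / wvk k z)))"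
      using euler_solution_far[OF z] False wz(1) unfolding K_def by (intro mult_left_mono) auto
    also have "\<dots> = K ^ 2 * (wvk k z * (2 * M / \<beta>) + 4 * M)"
      using wz by (simp add: field_simps power2_eq_square)
    also have "\<dots> \<le> K ^ 2 * (1 * (2 * M / \<beta>) + 4 * M)"
      using wz M by (intro mult_left_mono add_right_mono mult_right_mono) auto
    finally show ?thesis by (simp add: K_def algebra_simps)
  qed
qed

end

section \<open>The resolvent off the point spectrum\<close>

lemma one_minus_tz_powr_bounded:
  fixes c :: complex
  assumes "0 \<le> t" "t < 1"
  obtains K where "0 < K" "\<And>z. z \<in> ball 0 1 \<Longrightarrow> norm ((1 - of_real t * z) powr c) \<le> K"
proof
  define K where "K = (2 / (1 - t)) powr \<bar>Re c\<bar> * exp (\<bar>Im c\<bar> * pi)"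
  show "0 < K" using assms by (simp add: K_def)
  fix z :: complex assume z: "z \<in> ball 0 1"
  define w where "w = 1 - of_real t * z"
  have "norm w powr Re c \<le> (2 / (1 - t)) powr \<bar>Re c\<bar>"
    using one_minus_tz_bounds(1,4)[OF assms, of z] z assms
    by (intro powr_le_ratio_powr_abs) (auto simp: w_def)
  moreover have "- Im c * Arg w \<le> \<bar>Im c\<bar> * pi"
  proof -
    have "\<bar>Arg w\<bar> \<le> pi" using Arg_bounded[of w] by linarith
    hence "\<bar>Im c\<bar> * \<bar>Arg w\<bar> \<le> \<bar>Im c\<bar> * pi" by (rule mult_left_mono) simp
    thus ?thesis by (metis abs_ge_minus_self abs_mult mult_minus_left order_trans)
  qed
  ultimately show "norm ((1 - of_real t * z) powr c) \<le> K"
    unfolding K_def w_def[symmetric] norm_powr_complex by (intro mult_mono) auto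
qed

lemma has_field_derivative_one_minus_tz_powr:
  fixes c z :: complex
  assumes "0 \<le> t" "t < 1" "z \<in> ball 0 1"
  shows "((\<lambda>z. (1 - of_real t * z) powr c) has_field_derivative
      - of_real t * c * (1 - of_real t * z) powr c / (1 - of_real t * z)) (at z)"
proof -
  have w: "1 - of_real t * z \<notin> \<real>\<^sub>\<le>\<^sub>0" "1 - of_real t * z \<noteq> 0"
    using one_minus_tz_bounds(2,3)[OF assms(1,2)] assms(3) by auto
  have "((\<lambda>z. (1 - of_real t * z) powr c) has_field_derivative
      c * (1 - of_real t * z) powr (c - 1) * (- of_real t)) (at z)"
    using w(1) by (auto intro!: derivative_eq_intros)
  thus ?thesis using w(2) by (simp add: powr_diff mult_ac)
qed

lemma Ces_resolvent_equation:
  assumes t: "0 \<le> t" "t < 1" and la: "l * a = 1"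
    and \<Psi>: "\<Psi> holomorphic_on ball 0 1"
    and euler: "\<And>z. z \<in> ball 0 1 \<Longrightarrow>
      z * deriv \<Psi> z + (1 - a) * \<Psi> z = (1 - of_real t * z) powr (a - 1) * h z"
    and f: "\<And>z. z \<in> ball 0 1 \<Longrightarrow> f z = a * h z + a ^ 2 * (1 - of_real t * z) powr (- a) * \<Psi> z"
    and z: "z \<in> ball 0 1"
  shows "l * f z - Ces t f z = h z"
proof -
  define E where "E z = (1 - of_real t * z) powr (- a)" for z
  have "Ces t f z = a * E z * \<Psi> z"
  proof (rule Ces_eqI[OF _ _ z])
    show "(\<lambda>z. a * E z * \<Psi> z) holomorphic_on ball 0 1"
      unfolding E_def by (intro holomorphic_intros \<Psi>) (use one_minus_tz_bounds(2)[OF t] in auto)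
    fix x :: complex assume x: "x \<in> ball 0 1"
    define d where "d = 1 - of_real t * x"
    have d: "d \<noteq> 0" using one_minus_tz_bounds(3)[OF t] x by (auto simp: d_def)
    have dd: "d + of_real t * x = 1" by (simp add: d_def)
    have "(\<Psi> has_field_derivative deriv \<Psi> x) (at x)"
      using \<Psi> x by (intro holomorphic_derivI[of _ "ball 0 1"]) auto
    from DERIV_mult[OF DERIV_mult[OF DERIV_cmult[OF DERIV_ident, of a]
           has_field_derivative_one_minus_tz_powr[OF t x, of "- a"]] this]
    have D: "((\<lambda>x. a * x * E x * \<Psi> x) has_field_derivative
        (a * 1 * E x + - of_real t * - a * E x / d * (a * x)) * \<Psi> x + deriv \<Psi> x * (a * x * E x)) (at x)"
      by (simp add: E_def d_def)
    have "E x * (1 - of_real t * x) powr (a - 1) = d powr (- a + (a - 1))"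
      by (simp only: E_def d_def powr_add)
    also have "\<dots> = 1 / d" using d by (simp add: powr_minus_divide)
    finally have EE: "E x * (1 - of_real t * x) powr (a - 1) = 1 / d" .
    have "(a * 1 * E x + - of_real t * - a * E x / d * (a * x)) * \<Psi> x + deriv \<Psi> x * (a * x * E x)
        = a * E x * \<Psi> x + a * a * E x * (of_real t * x) * \<Psi> x / d
          + a * E x * (x * deriv \<Psi> x + (1 - a) * \<Psi> x) - a * (1 - a) * E x * \<Psi> x"
      using d by (simp add: field_simps)
    also have "\<dots> = a * a * E x * \<Psi> x * ((d + of_real t * x) / d) + a * h x / d"
      unfolding euler[OF x] using d EE by (simp add: field_simps)
    also have "\<dots> = (a * h x + a ^ 2 * E x * \<Psi> x) / d"
      unfolding dd
      using d by (simp add: d_def[symmetric] field_simps power2_eq_square)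
    also have "\<dots> = f x / d" using f[OF x] by (simp add: E_def)
    finally show "((\<lambda>x. x * (a * E x * \<Psi> x)) has_field_derivative f x / (1 - of_real t * x)) (at x)"
      using D by (simp add: d_def ac_simps)
  qed
  moreover have "l * f z = (l * a) * h z + (l * a) * (a * E z * \<Psi> z)"
    using f[OF z] by (simp add: E_def algebra_simps power2_eq_square)
  hence "l * f z = h z + a * E z * \<Psi> z" using la by simp
  ultimately show ?thesis by simp
qed

lemma weighted_norm_combination_le:
  fixes a x e y :: complex
  assumes "0 \<le> w" "w * norm x \<le> N" "norm e \<le> K" "w * norm y \<le> M" "0 \<le> K"
  shows "w * norm (a * x + a ^ 2 * e * y) \<le> norm a * N + norm a ^ 2 * K * M"
proof -
  have "w * norm (a * x + a ^ 2 * e * y) \<le> w * (norm a * norm x + norm a ^ 2 * norm e * norm y)"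
    using assms(1) norm_triangle_ineq[of "a * x" "a ^ 2 * e * y"]
    by (intro mult_left_mono) (simp_all add: norm_mult norm_power)
  also have "\<dots> = norm a * (w * norm x) + (norm a ^ 2 * norm e) * (w * norm y)"
    by (simp add: algebra_simps)
  also have "\<dots> \<le> norm a * N + (norm a ^ 2 * K) * M"
    using assms by (intro add_mono mult_left_mono mult_mono) auto
  finally show ?thesis by simp
qed

lemma Ces_resolvent_solution:
  assumes t: "0 \<le> t" "t < 1" and la: "l * a = 1"
    and \<beta>: "0 < \<beta>" "\<And>n. \<beta> \<le> norm (of_nat n + (1 - a))"
    and K1: "0 \<le> K1" "\<And>z. z \<in> ball 0 1 \<Longrightarrow> norm ((1 - of_real t * z) powr (a - 1)) \<le> K1"
    and K2: "0 \<le> K2" "\<And>z. z \<in> ball 0 1 \<Longrightarrow> norm ((1 - of_real t * z) powr (- a)) \<le> K2"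
    and h: "h \<in> Hv k"
  defines "C \<equiv> norm a + norm a ^ 2 * K2 * ((4 powr \<bar>Re (1 - a)\<bar>) ^ 2 * (2 / \<beta> + 4) * K1)"
  shows "\<exists>f\<in>Hv k. (\<lambda>z. l * f z - Ces t f z) = h \<and> Hv_norm k f \<le> C * Hv_norm k h"
proof -
  define N where "N = Hv_norm k h"
  have hN: "wvk k z * norm (h z) \<le> N" if "z \<in> ball 0 1" for z
    using Hv_norm_upper[OF h that] by (simp add: N_def)
  define \<psi> where "\<psi> z = (1 - of_real t * z) powr (a - 1) * h z" for z
  interpret euler_equation "1 - a" \<beta> \<psi> k "K1 * N"
  proof
    show "\<psi> holomorphic_on ball 0 1"
      unfolding \<psi>_def using HvD(1)[OF h] one_minus_tz_bounds(2)[OF t]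
      by (intro holomorphic_intros) auto
    show "wvk k z * norm (\<psi> z) \<le> K1 * N" if z: "z \<in> ball 0 1" for z
    proof -
      have "wvk k z * norm (\<psi> z) = norm ((1 - of_real t * z) powr (a - 1)) * (wvk k z * norm (h z))"
        by (simp add: \<psi>_def norm_mult)
      also have "\<dots> \<le> K1 * N"
        using K1 hN[OF z] wvk_pos_le_one[of z k] z by (intro mult_mono) auto
      finally show ?thesis .
    qed
  qed (use \<beta> in auto)
  define \<Psi> where "\<Psi> = euler_solution (1 - a) \<psi>"
  define f where "f z = (if norm z < 1 then a * h z + a ^ 2 * (1 - of_real t * z) powr (- a) * \<Psi> z else 0)"
    for z
  have fN: "wvk k z * norm (f z) \<le> C * N" if z: "z \<in> ball 0 1" for z
    using weighted_norm_combination_le[OF _ hN[OF z] K2(2)[OF z] euler_solution_weighted_bound[OF z] K2(1)]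
      wvk_pos_le_one[of z k] z
    by (simp add: f_def \<Psi>_def C_def algebra_simps)
  have "f holomorphic_on ball 0 1"
  proof (rule holomorphic_transform)
    show "(\<lambda>z. a * h z + a ^ 2 * (1 - of_real t * z) powr (- a) * \<Psi> z) holomorphic_on ball 0 1"
      unfolding \<Psi>_def using HvD(1)[OF h] holomorphic_on_euler_solution one_minus_tz_bounds(2)[OF t]
      by (intro holomorphic_intros) auto
  qed (simp add: f_def)
  hence fHv: "f \<in> Hv k" using fN by (intro HvI) (auto simp: f_def)
  have "l * f z - Ces t f z = h z" for z
  proof (cases "z \<in> ball 0 1")
    case True
    show ?thesis
    proof (rule Ces_resolvent_equation[OF t la _ _ _ True])
      show "\<Psi> holomorphic_on ball 0 1" unfolding \<Psi>_def by (rule holomorphic_on_euler_solution)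
      show "x * deriv \<Psi> x + (1 - a) * \<Psi> x = (1 - of_real t * x) powr (a - 1) * h x"
        if "x \<in> ball 0 1" for x
        using euler_solution_solves[OF that] by (simp add: \<Psi>_def \<psi>_def)
    qed (simp add: f_def)
  qed (use HvD(2)[OF h] in \<open>auto simp: f_def Ces_outside\<close>)
  thus ?thesis using fHv fN by (auto simp: N_def intro!: bexI[of _ f] Hv_norm_least)
qed

lemma Ces_resolvent_solvable:
  assumes t: "0 \<le> t" "t < 1"
    and l: "l \<notin> {1 / of_nat (m + 1) | m :: nat. True}" "l \<noteq> 0"
  obtains C where "\<And>k h. h \<in> Hv k \<Longrightarrow>
    \<exists>f\<in>Hv k. (\<lambda>z. l * f z - Ces t f z) = h \<and> Hv_norm k f \<le> C * Hv_norm k h"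
proof -
  define a where "a = 1 / l"
  have la: "l * a = 1" using l(2) by (simp add: a_def)
  have "of_nat n + (1 - a) \<noteq> 0" for n
  proof
    assume "of_nat n + (1 - a) = 0"
    hence "l * of_nat (n + 1) = 1" using l(2) by (simp add: a_def field_simps)
    hence "l = 1 / of_nat (n + 1)" by (simp add: eq_divide_eq del: of_nat_Suc)
    thus False using l(1) by blast
  qed
  then obtain \<beta> where \<beta>: "0 < \<beta>" "\<And>n. \<beta> \<le> norm (of_nat n + (1 - a))"
    using norm_of_nat_add_bounded_below by blast
  obtain K1 where K1: "0 < K1" "\<And>z. z \<in> ball 0 1 \<Longrightarrow> norm ((1 - of_real t * z) powr (a - 1)) \<le> K1"
    using one_minus_tz_powr_bounded[OF t] by blast
  obtain K2 where K2: "0 < K2" "\<And>z. z \<in> ball 0 1 \<Longrightarrow> norm ((1 - of_real t * z) powr (- a)) \<le> K2"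
    using one_minus_tz_powr_bounded[OF t] by blast
  show ?thesis
    by (rule that, rule Ces_resolvent_solution[OF t la \<beta> _ K1(2) _ K2(2)]) (use K1(1) K2(1) in auto)
qed

lemma in_VH_resolvent_Ces:
  assumes t: "0 \<le> t" "t < 1"
    and l: "l \<notin> {1 / of_nat (m + 1) | m :: nat. True}" "l \<noteq> 0"
  shows "l \<in> VH_resolvent (Ces t)"
proof -
  obtain C where C: "\<And>k h. h \<in> Hv k \<Longrightarrow>
      \<exists>f\<in>Hv k. (\<lambda>z. l * f z - Ces t f z) = h \<and> Hv_norm k f \<le> C * Hv_norm k h"
    using Ces_resolvent_solvable[OF t l] by blast
  show ?thesis
  proof (rule in_VH_resolventI[OF _ _ C])
    show "VH_linear (Ces t)" using VH_cont_op_Ces[OF t] by (simp add: VH_cont_op_def)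
    show "l \<notin> VH_point_spectrum (Ces t)" using point_spectrum_Ces[OF t] l(1) by simp
  qed
qed

section \<open>Zero belongs to the spectrum\<close>

lemma Ces_preimage_of_sqrt:
  assumes t: "0 \<le> t" "t < 1" and g: "g holomorphic_on ball 0 1"
    and Ces_g: "\<And>z. z \<in> ball 0 1 \<Longrightarrow> Ces t g z = - csqrt (1 - z)"
    and z: "z \<in> ball 0 1"
  shows "g z = (1 - of_real t * z) * (z / (2 * csqrt (1 - z)) - csqrt (1 - z))"
proof (rule Ces_eqD[OF t g Ces_g z])
  have "1 - z \<notin> \<real>\<^sub>\<le>\<^sub>0" "csqrt (1 - z) \<noteq> 0"
    using one_minus_in_unit_disc(2,3)[of z] z by auto
  thus "((\<lambda>x. x * - csqrt (1 - x)) has_field_derivative z / (2 * csqrt (1 - z)) - csqrt (1 - z)) (at z)"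
    by (auto intro!: derivative_eq_intros simp: field_simps)
qed

lemma norm_sqrt_preimage_lower_bound:
  fixes t x :: real
  assumes "0 \<le> t" "t < 1" "0 < x" "x \<le> 1/16"
  defines "r \<equiv> complex_of_real (1 - x)"
  shows "(1 - t) / (4 * sqrt x) \<le> norm ((1 - of_real t * r) * (r / (2 * csqrt (1 - r)) - csqrt (1 - r)))"
proof -
  have sx: "0 < sqrt x" "sqrt x * sqrt x = x" using assms by auto
  have "csqrt (1 - r) = of_real (sqrt x)" using assms by (simp add: r_def csqrt_of_real)
  hence "(1 - of_real t * r) * (r / (2 * csqrt (1 - r)) - csqrt (1 - r))
      = of_real ((1 - t * (1 - x)) * ((1 - x) / (2 * sqrt x) - sqrt x))"
    by (simp add: r_def)
  hence N: "norm ((1 - of_real t * r) * (r / (2 * csqrt (1 - r)) - csqrt (1 - r)))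
      = \<bar>1 - t * (1 - x)\<bar> * \<bar>(1 - x) / (2 * sqrt x) - sqrt x\<bar>"
    by (simp only: norm_of_real abs_mult)
  have A: "1 - t \<le> \<bar>1 - t * (1 - x)\<bar>"
  proof -
    have tx: "0 \<le> t * x" using assms by simp
    have "1 - t * (1 - x) = (1 - t) + t * x" by (simp add: algebra_simps)
    moreover have "0 \<le> (1 - t) + t * x" using tx assms by linarith
    ultimately have "\<bar>1 - t * (1 - x)\<bar> = (1 - t) + t * x" by simp
    thus ?thesis using tx by linarith
  qed
  have B: "1 / (4 * sqrt x) \<le> \<bar>(1 - x) / (2 * sqrt x) - sqrt x\<bar>"
  proof -
    have "(1 - x) / (2 * sqrt x) - sqrt x = (1 - 3 * x) / (2 * sqrt x)"
      using sx by (simp add: field_simps)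
    moreover have "(1/2) / (2 * sqrt x) \<le> (1 - 3 * x) / (2 * sqrt x)"
      using sx assms by (intro divide_right_mono) auto
    ultimately have "1 / (4 * sqrt x) \<le> (1 - x) / (2 * sqrt x) - sqrt x" by simp
    thus ?thesis by linarith
  qed
  have "(1 - t) * (1 / (4 * sqrt x)) \<le> \<bar>1 - t * (1 - x)\<bar> * \<bar>(1 - x) / (2 * sqrt x) - sqrt x\<bar>"
    using assms sx by (intro mult_mono[OF A B]) auto
  thus ?thesis unfolding N by simp
qed

lemma csqrt_one_minus_Hv: "(\<lambda>z. if norm z < 1 then csqrt (1 - z) else 0) \<in> Hv 0"
proof (rule HvI)
  show "(\<lambda>z. if norm z < 1 then csqrt (1 - z) else 0) holomorphic_on ball 0 1"
    by (rule holomorphic_transform[of "\<lambda>z. csqrt (1 - z)"])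
       (auto intro!: holomorphic_intros dest: one_minus_in_unit_disc(2))
  fix z :: complex assume "z \<in> ball 0 1"
  hence "norm (1 - z) \<le> 2" by (intro one_minus_in_unit_disc(5)) simp
  thus "wvk 0 z * norm (if norm z < 1 then csqrt (1 - z) else 0) \<le> sqrt 2"
    by (simp add: wvk_def)
qed simp

lemma exp_half_dominates_power:
  assumes "0 < c"
  obtains L :: real where "16 \<le> L" "C < (1 / L) ^ k * (c * exp (L / 2))"
proof -
  have "filterlim (\<lambda>L::real. exp (L / 2) / L ^ k) at_top at_top" by real_asymp
  hence "filterlim (\<lambda>L::real. c * (exp (L / 2) / L ^ k)) at_top at_top"
    using assms by (intro filterlim_tendsto_pos_mult_at_top[OF tendsto_const]) auto
  hence "eventually (\<lambda>L. C < c * (exp (L / 2) / L ^ k) \<and> 16 \<le> L) at_top"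
    by (intro eventually_conj) (auto simp: filterlim_at_top_dense eventually_ge_at_top)
  then obtain L where "C < c * (exp (L / 2) / L ^ k)" "16 \<le> L"
    by (auto simp: eventually_at_top_linorder)
  thus ?thesis using that[of L] by (simp add: power_one_over field_simps)
qed

text \<open>\<open>0\<close> is not in the resolvent because \<open>\<surd>(1 - z) \<in> H\<^sub>v\<^sub>0\<close> is not in the range of
  \<open>C\<^sub>t\<close>: a preimage would grow like \<open>(1 - |z|)\<^sup>-\<^sup>1\<^sup>/\<^sup>2\<close> along the radius, faster than
  any power of \<open>-log(1 - |z|)\<close>.\<close>

lemma zero_not_in_resolvent_Ces:
  assumes t: "0 \<le> t" "t < 1"
  shows "0 \<notin> VH_resolvent (Ces t)"
proof
  assume "0 \<in> VH_resolvent (Ces t)"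
  then obtain S where S: "VH_cont_op S" "\<forall>f\<in>VH. (\<lambda>z. 0 * S f z - Ces t (S f) z) = f"
    unfolding VH_resolvent_def by blast
  define f where "f z = (if norm z < 1 then csqrt (1 - z) else 0)" for z
  have fV: "f \<in> VH" using csqrt_one_minus_Hv by (auto simp: mem_VH_iff f_def[abs_def])
  define g where "g = S f"
  have gV: "g \<in> VH" using S(1) fV unfolding g_def VH_cont_op_def VH_linear_def by blast
  have Ces_g: "Ces t g z = - csqrt (1 - z)" if "z \<in> ball 0 1" for z
    using fun_cong[OF S(2)[rule_format, OF fV], of z] that by (simp add: g_def f_def minus_equation_iff)
  obtain k where "g \<in> Hv k" using gV by (auto simp: mem_VH_iff)
  then obtain Cb where Cb: "\<forall>z\<in>ball 0 1. wvk k z * norm (g z) \<le> Cb"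
    using HvD(3) by blast
  obtain L where L: "16 \<le> L" "Cb < (1 / L) ^ k * ((1 - t) / 4 * exp (L / 2))"
    using exp_half_dominates_power[of "(1 - t) / 4"] t by auto
  define x where "x = exp (- L)"
  define r where "r = complex_of_real (1 - x)"
  have "16 \<le> exp L" using exp_ge_add_one_self[of L] L(1) by linarith
  hence x: "0 < x" "x \<le> 1/16" by (auto simp: x_def exp_minus field_simps)
  have rb: "r \<in> ball 0 1" using x unfolding r_def mem_ball_0 norm_of_real by simp
  have "exp (- L / 2) * exp (- L / 2) = x" by (simp add: x_def flip: exp_add)
  hence "sqrt x = exp (- L / 2)" using real_sqrt_abs2[of "exp (- L / 2)"] by simp
  hence "(1 - t) / 4 * exp (L / 2) = (1 - t) / (4 * sqrt x)"
    by (simp add: field_simps exp_minus_inverse)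
  also have "\<dots> \<le> norm ((1 - of_real t * r) * (r / (2 * csqrt (1 - r)) - csqrt (1 - r)))"
    unfolding r_def by (rule norm_sqrt_preimage_lower_bound[OF t x])
  also have "\<dots> = norm (g r)"
    by (simp only: Ces_preimage_of_sqrt[OF t holomorphic_on_VH[OF gV] Ces_g rb])
  finally have "(1 - t) / 4 * exp (L / 2) \<le> norm (g r)" .
  moreover have "wvk k r = (1 / L) ^ k"
    unfolding wvk_def r_def x_def using wv_one_minus_exp[of L] L(1) by simp
  ultimately have "(1 / L) ^ k * ((1 - t) / 4 * exp (L / 2)) \<le> wvk k r * norm (g r)"
    using L(1) by (simp add: mult_left_mono)
  moreover have "wvk k r * norm (g r) \<le> Cb" using Cb rb by blast
  ultimately show False using L(2) by linarith
qed

theorem proposition3p5: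
  fixes t :: real
  assumes "0 \<le> t" and "t < 1"
  shows "VH_cont_op (Ces t) \<and>
         VH_point_spectrum (Ces t) = {1 / of_nat (m + 1) | m :: nat. True} \<and>
         VH_spectrum (Ces t) = {1 / of_nat (m + 1) | m :: nat. True} \<union> {0}"
proof (intro conjI)
  show "VH_cont_op (Ces t)" by (rule VH_cont_op_Ces[OF assms])
  show P: "VH_point_spectrum (Ces t) = {1 / of_nat (m + 1) | m :: nat. True}"
    by (rule point_spectrum_Ces[OF assms])
  have "VH_spectrum (Ces t) \<subseteq> {1 / of_nat (m + 1) | m :: nat. True} \<union> {0}"
    using in_VH_resolvent_Ces[OF assms] by (auto simp: VH_spectrum_def)
  moreover have "{1 / of_nat (m + 1) | m :: nat. True} \<union> {0} \<subseteq> VH_spectrum (Ces t)"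
    using point_spectrum_disjoint_resolvent[of _ "Ces t"] zero_not_in_resolvent_Ces[OF assms]
    unfolding P[symmetric] by (auto simp: VH_spectrum_def)
  ultimately show "VH_spectrum (Ces t) = {1 / of_nat (m + 1) | m :: nat. True} \<union> {0}" by blast
qed

end
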